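(* Let $\psi:C_Z\to\mathbb{R}$ be an increasing convex functional. Then: (i) there exists an increasing convex function $\varphi:\mathbb{R}_+\to\mathbb{R}\cup\{+\infty\}$ with $\lim_{x\to+\infty}\varphi(x)/x=+\infty$ such that $\psi^*_{C_Z}(\mu)\ge\varphi(\langle Z,\mu\rangle)$ for all $\mu\in ca^+_Z$; (ii) if $\lim_{z\to+\infty}\psi(n(Z-z)^+)=\psi(0)$ for every $n\in\mathbb{N}$, then for every $a\in\mathbb{R}$ the sublevel set $\{\mu\in ca^+_Z:\psi^*_{C_Z}(\mu)\le a\}$ is $\sigma(ca^+_Z,C_Z)$-compact.
   Context: Fix integers $J\ge0$, $T\ge1$. $\Omega$ is a non-empty subset of $((0,\infty)\times\mathbb{R}^J)^T$ with the Euclidean metric. $Z:\Omega\to[1,\infty)$ is continuous with $\{\omega\in\Omega:Z(\omega)\le z\}$ compact for every $z\in\mathbb{R}_+$. $C_Z$ is the space of continuous $X:\Omega\to\mathbb{R}$ with $X/Z$ bounded. $ca^+_Z$ is the set of (nonnegative) Borel measures $\mu$ on $\Omega$ with $\langle Z,\mu\rangle:=\int Z\,d\mu<\infty$; $\langle X,\mu\rangle=\int X\,d\mu$. $\sigma(ca^+_Z,C_Z)$ is the coarsest topology on $ca^+_Z$ making $\mu\mapsto\langle X,\mu\rangle$ continuous for all $X\in C_Z$. Increasing means $f(x)\ge f(y)$ whenever $x\ge y$. $\psi^*_{C_Z}(\mu)=\sup_{X\in C_Z}(\langle X,\mu\rangle-\psi(X))$. *)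

theory Defs
  imports "HOL-Analysis.Analysis"
begin

text \<open>The underlying space: points of ((0,oo) x R^J)^T are represented as elements of
  type (real^'k)^'t where CARD('t) = T, CARD('k) = J+1 and a distinguished index k0 :: 'k
  marks the coordinate that must be strictly positive.\<close>

definition state_space :: "'k \<Rightarrow> ((real^'k::finite)^'t::finite) set" where
  "state_space k0 = {x. \<forall>t. x $ t $ k0 > 0}"

definition CZ :: "'a::topological_space set \<Rightarrow> ('a \<Rightarrow> real) \<Rightarrow> ('a \<Rightarrow> real) set" where
  "CZ \<Omega> Z = {X. continuous_on \<Omega> X \<and> (\<exists>c. \<forall>\<omega>\<in>\<Omega>. \<bar>X \<omega> / Z \<omega>\<bar> \<le> c)}"

definition caZ :: "'a::topological_space set \<Rightarrow> ('a \<Rightarrow> real) \<Rightarrow> 'a measure set" where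
  "caZ \<Omega> Z = {\<mu>. space \<mu> = \<Omega> \<and> sets \<mu> = sets (restrict_space borel \<Omega>)
                  \<and> (\<integral>\<^sup>+ \<omega>. ennreal (Z \<omega>) \<partial>\<mu>) < \<infinity>}"

definition pairing :: "('a \<Rightarrow> real) \<Rightarrow> 'a measure \<Rightarrow> real" where
  "pairing X \<mu> = (\<integral>\<omega>. X \<omega> \<partial>\<mu>)"

definition weak_topology_caZ :: "'a::topological_space set \<Rightarrow> ('a \<Rightarrow> real) \<Rightarrow> 'a measure topology" where
  "weak_topology_caZ \<Omega> Z = topology_generated_by
     {{\<mu> \<in> caZ \<Omega> Z. pairing X \<mu> \<in> U} | X U. X \<in> CZ \<Omega> Z \<and> open U}"

definition conj_CZ :: "'a::topological_space set \<Rightarrow> ('a \<Rightarrow> real) \<Rightarrow> (('a \<Rightarrow> real) \<Rightarrow> real)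
                          \<Rightarrow> 'a measure \<Rightarrow> ereal" where
  "conj_CZ \<Omega> Z \<psi> \<mu> = (SUP X\<in>CZ \<Omega> Z. ereal (pairing X \<mu> - \<psi> X))"

definition increasing_on_CZ :: "'a::topological_space set \<Rightarrow> ('a \<Rightarrow> real) \<Rightarrow> (('a \<Rightarrow> real) \<Rightarrow> real) \<Rightarrow> bool" where
  "increasing_on_CZ \<Omega> Z \<psi> \<longleftrightarrow>
     (\<forall>X\<in>CZ \<Omega> Z. \<forall>Y\<in>CZ \<Omega> Z. (\<forall>\<omega>\<in>\<Omega>. Y \<omega> \<le> X \<omega>) \<longrightarrow> \<psi> Y \<le> \<psi> X)"

definition convex_on_CZ :: "'a::topological_space set \<Rightarrow> ('a \<Rightarrow> real) \<Rightarrow> (('a \<Rightarrow> real) \<Rightarrow> real) \<Rightarrow> bool" where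
  "convex_on_CZ \<Omega> Z \<psi> \<longleftrightarrow>
     (\<forall>X\<in>CZ \<Omega> Z. \<forall>Y\<in>CZ \<Omega> Z. \<forall>u::real. 0 \<le> u \<and> u \<le> 1 \<longrightarrow>
        \<psi> (\<lambda>\<omega>. (1 - u) * X \<omega> + u * Y \<omega>) \<le> (1 - u) * \<psi> X + u * \<psi> Y)"

text \<open>Convexity of an extended-real-valued function on a set of reals
  (with the convention 0 * oo = 0).\<close>
definition ereal_convex_on :: "real set \<Rightarrow> (real \<Rightarrow> ereal) \<Rightarrow> bool" where
  "ereal_convex_on S \<phi> \<longleftrightarrow>
     (\<forall>x\<in>S. \<forall>y\<in>S. \<forall>u::real. 0 \<le> u \<and> u \<le> 1 \<longrightarrow>
        \<phi> ((1 - u) * x + u * y) \<le> ereal (1 - u) * \<phi> x + ereal u * \<phi> y)"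

end

theory Submission
  imports Defs
begin

text \<open>
  (i) Testing \<open>\<psi>\<^sup>*\<close> only against the multiples \<open>n Z\<close> gives the minorant
  \<open>\<phi>(x) = sup\<^sub>n (n x - \<psi>(n Z))\<close>, a supremum of affine functions with slopes \<open>n \<rightarrow> \<infinity>\<close>,
  hence increasing, convex and superlinear.

  (ii) The map \<open>\<mu> \<mapsto> (\<langle>X,\<mu>\<rangle>)\<^sub>X\<^sub>\<in>\<^sub>C\<^sub>Z\<close> into the product space \<open>\<real>\<^bsup>C\<^sub>Z\<^esup>\<close> induces
  \<open>\<sigma>(ca\<^sup>+\<^sub>Z,C\<^sub>Z)\<close>. On the sublevel set \<open>{\<psi>\<^sup>* \<le> a}\<close> we have \<open>\<langle>X,\<mu>\<rangle> - \<psi>(X) \<le> a\<close> for all \<open>X\<close>,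
  in particular \<open>\<langle>Z,\<mu>\<rangle> \<le> a + \<psi>(Z)\<close>, so its image lies in a compact box. The image is also
  closed: a limit point \<open>\<ell>\<close> is a positive linear functional with \<open>\<ell> \<le> a + \<psi>\<close>, and the
  hypothesis on \<open>\<psi>(n(Z-z)\<^sup>+)\<close> makes \<open>\<ell>\<close> tight, \<open>\<ell>((Z-z)\<^sup>+) \<rightarrow> 0\<close>. A Riesz representation
  theorem for tight positive functionals on \<open>C\<^sub>Z\<close> then represents \<open>\<ell>\<close> by a measure in the
  sublevel set. That theorem comes from Caratheodory's construction applied to the outer
  content \<open>A \<mapsto> inf {sup {\<ell> f | 0 \<le> f \<le> 1, f = 0 off G} | A \<subseteq> G open}\<close>; tightness takes the
  place of local compactness, making the content countably subadditive and giving
  \<open>\<ell>(min X n) \<rightarrow> \<ell>(X)\<close>.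
\<close>

section \<open>Conjugates of sequences\<close>

definition nat_conjugate :: "(nat \<Rightarrow> real) \<Rightarrow> real \<Rightarrow> ereal" where
  "nat_conjugate p x = (SUP n. ereal (real n * x - p n))"

lemma nat_conjugate_ge: "ereal (real n * x - p n) \<le> nat_conjugate p x"
  unfolding nat_conjugate_def by (rule SUP_upper) auto

lemma nat_conjugate_neq_MInfty: "nat_conjugate p x \<noteq> -\<infinity>"
  using nat_conjugate_ge[of 0 x p] by auto

lemma mono_on_nat_conjugate: "mono_on {0..} (nat_conjugate p)"
proof (rule mono_onI)
  fix x y :: real assume "x \<in> {0..}" "y \<in> {0..}" "x \<le> y"
  then show "nat_conjugate p x \<le> nat_conjugate p y"
    unfolding nat_conjugate_def
    by (intro SUP_mono) (metis UNIV_I diff_right_mono mult_left_mono of_nat_0_le_iff ereal_less_eq(3))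
qed

lemma ereal_convex_on_nat_conjugate: "ereal_convex_on S (nat_conjugate p)"
  unfolding ereal_convex_on_def
proof (intro ballI allI impI)
  fix x y u :: real assume u: "0 \<le> u \<and> u \<le> 1"
  show "nat_conjugate p ((1 - u) * x + u * y)
          \<le> ereal (1 - u) * nat_conjugate p x + ereal u * nat_conjugate p y"
    unfolding nat_conjugate_def[of p "(1 - u) * x + u * y"]
  proof (rule SUP_least)
    fix n :: nat
    have "ereal (real n * ((1 - u) * x + u * y) - p n)
          = ereal (1 - u) * ereal (real n * x - p n) + ereal u * ereal (real n * y - p n)"
      by (simp add: algebra_simps)
    also have "\<dots> \<le> ereal (1 - u) * nat_conjugate p x + ereal u * nat_conjugate p y"
      using u by (intro add_mono ereal_mult_left_mono nat_conjugate_ge) auto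
    finally show "ereal (real n * ((1 - u) * x + u * y) - p n)
                    \<le> ereal (1 - u) * nat_conjugate p x + ereal u * nat_conjugate p y" .
  qed
qed

lemma nat_conjugate_superlinear: "((\<lambda>x. nat_conjugate p x / ereal x) \<longlongrightarrow> \<infinity>) at_top"
  unfolding tendsto_PInfty
proof
  fix r :: real
  obtain n :: nat where n: "r + 1 < real n" using reals_Archimedean2 by blast
  have "eventually (\<lambda>x. x > max 1 \<bar>p n\<bar>) at_top" by (rule eventually_gt_at_top)
  then show "eventually (\<lambda>x. ereal r < nat_conjugate p x / ereal x) at_top"
  proof eventually_elim
    case (elim x)
    then have x: "x > 0" "x > \<bar>p n\<bar>" by auto
    have "p n / x < 1" using x by (simp add: divide_less_eq)
    moreover have "(real n * x - p n) / x = real n - p n / x"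
      using x by (simp add: diff_divide_distrib)
    ultimately have "r < (real n * x - p n) / x" using n by linarith
    also have "ereal ((real n * x - p n) / x) = ereal (real n * x - p n) / ereal x"
      using x by simp
    also have "\<dots> \<le> nat_conjugate p x / ereal x"
      using x by (intro ereal_divide_right_mono nat_conjugate_ge) auto
    finally show ?case by simp
  qed
qed

section \<open>The space \<open>C\<^sub>Z\<close> and the cone \<open>ca\<^sup>+\<^sub>Z\<close>\<close>

locale weighted_space =
  fixes \<Omega> :: "'a::topological_space set" and Z :: "'a \<Rightarrow> real"
  assumes Z_ge1: "\<forall>\<omega>\<in>\<Omega>. 1 \<le> Z \<omega>"
    and Z_cont: "continuous_on \<Omega> Z"
begin

lemma CZ_I:
  assumes "continuous_on \<Omega> X" and "\<forall>\<omega>\<in>\<Omega>. \<bar>X \<omega>\<bar> \<le> c * Z \<omega>"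
  shows "X \<in> CZ \<Omega> Z"
  unfolding CZ_def
proof (intro CollectI conjI exI)
  show "continuous_on \<Omega> X" by fact
  show "\<forall>\<omega>\<in>\<Omega>. \<bar>X \<omega> / Z \<omega>\<bar> \<le> c"
  proof
    fix \<omega> assume \<omega>: "\<omega> \<in> \<Omega>"
    then have "Z \<omega> > 0" using Z_ge1 by force
    then show "\<bar>X \<omega> / Z \<omega>\<bar> \<le> c" using assms(2) \<omega> by (simp add: abs_divide divide_le_eq)
  qed
qed

lemma CZ_boundE:
  assumes "X \<in> CZ \<Omega> Z"
  obtains c where "c \<ge> 0" "\<forall>\<omega>\<in>\<Omega>. \<bar>X \<omega>\<bar> \<le> c * Z \<omega>"
proof -
  obtain c where c: "\<forall>\<omega>\<in>\<Omega>. \<bar>X \<omega> / Z \<omega>\<bar> \<le> c" using assms by (auto simp: CZ_def)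
  have "\<forall>\<omega>\<in>\<Omega>. \<bar>X \<omega>\<bar> \<le> \<bar>c\<bar> * Z \<omega>"
  proof
    fix \<omega> assume \<omega>: "\<omega> \<in> \<Omega>"
    then have Z: "Z \<omega> > 0" using Z_ge1 by force
    have "\<bar>X \<omega>\<bar> = \<bar>X \<omega> / Z \<omega>\<bar> * Z \<omega>" using Z by (simp add: abs_divide)
    also have "\<dots> \<le> \<bar>c\<bar> * Z \<omega>" using c \<omega> Z by (intro mult_right_mono) force+
    finally show "\<bar>X \<omega>\<bar> \<le> \<bar>c\<bar> * Z \<omega>" .
  qed
  then show ?thesis using that[of "\<bar>c\<bar>"] by auto
qed

lemma CZ_continuous_on: "X \<in> CZ \<Omega> Z \<Longrightarrow> continuous_on \<Omega> X"
  by (simp add: CZ_def)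

lemma CZ_bounded:
  assumes "continuous_on \<Omega> X" and "\<forall>\<omega>\<in>\<Omega>. \<bar>X \<omega>\<bar> \<le> B"
  shows "X \<in> CZ \<Omega> Z"
proof (rule CZ_I[OF assms(1), where c="\<bar>B\<bar>"])
  show "\<forall>\<omega>\<in>\<Omega>. \<bar>X \<omega>\<bar> \<le> \<bar>B\<bar> * Z \<omega>"
  proof
    fix \<omega> assume \<omega>: "\<omega> \<in> \<Omega>"
    have "\<bar>X \<omega>\<bar> \<le> \<bar>B\<bar>" using assms(2) \<omega> by force
    also have "\<dots> \<le> \<bar>B\<bar> * Z \<omega>" using Z_ge1 \<omega> by (simp add: mult_le_cancel_left1)
    finally show "\<bar>X \<omega>\<bar> \<le> \<bar>B\<bar> * Z \<omega>" .
  qed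
qed

lemma CZ_const: "(\<lambda>_. c) \<in> CZ \<Omega> Z"
  by (rule CZ_bounded[where B="\<bar>c\<bar>"]) auto

lemma CZ_Z: "Z \<in> CZ \<Omega> Z"
  using Z_ge1 by (intro CZ_I[OF Z_cont, where c=1]) auto

lemma CZ_add:
  assumes X: "X \<in> CZ \<Omega> Z" and Y: "Y \<in> CZ \<Omega> Z"
  shows "(\<lambda>\<omega>. X \<omega> + Y \<omega>) \<in> CZ \<Omega> Z"
proof -
  obtain c where c: "\<forall>\<omega>\<in>\<Omega>. \<bar>X \<omega>\<bar> \<le> c * Z \<omega>" using X by (rule CZ_boundE)
  obtain d where d: "\<forall>\<omega>\<in>\<Omega>. \<bar>Y \<omega>\<bar> \<le> d * Z \<omega>" using Y by (rule CZ_boundE)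
  show ?thesis
  proof (rule CZ_I[where c="c + d"])
    show "continuous_on \<Omega> (\<lambda>\<omega>. X \<omega> + Y \<omega>)"
      using X Y by (intro continuous_intros CZ_continuous_on)
    show "\<forall>\<omega>\<in>\<Omega>. \<bar>X \<omega> + Y \<omega>\<bar> \<le> (c + d) * Z \<omega>"
      using c d by (auto simp: distrib_right intro: order.trans[OF abs_triangle_ineq] add_mono)
  qed
qed

lemma CZ_cmult:
  assumes X: "X \<in> CZ \<Omega> Z"
  shows "(\<lambda>\<omega>. r * X \<omega>) \<in> CZ \<Omega> Z"
proof -
  obtain c where c: "c \<ge> 0" "\<forall>\<omega>\<in>\<Omega>. \<bar>X \<omega>\<bar> \<le> c * Z \<omega>" using X by (rule CZ_boundE)
  show ?thesis
  proof (rule CZ_I[where c="\<bar>r\<bar> * c"])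
    show "continuous_on \<Omega> (\<lambda>\<omega>. r * X \<omega>)" using X by (intro continuous_intros CZ_continuous_on)
    show "\<forall>\<omega>\<in>\<Omega>. \<bar>r * X \<omega>\<bar> \<le> (\<bar>r\<bar> * c) * Z \<omega>"
      using c by (auto simp: abs_mult mult.assoc intro: mult_left_mono)
  qed
qed

lemma CZ_uminus: "X \<in> CZ \<Omega> Z \<Longrightarrow> (\<lambda>\<omega>. - X \<omega>) \<in> CZ \<Omega> Z"
  using CZ_cmult[of X "-1"] by simp

lemma CZ_diff: "X \<in> CZ \<Omega> Z \<Longrightarrow> Y \<in> CZ \<Omega> Z \<Longrightarrow> (\<lambda>\<omega>. X \<omega> - Y \<omega>) \<in> CZ \<Omega> Z"
  using CZ_add[OF _ CZ_uminus, of X Y] by simp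

lemma CZ_sum:
  "finite J \<Longrightarrow> (\<And>j. j \<in> J \<Longrightarrow> X j \<in> CZ \<Omega> Z) \<Longrightarrow> (\<lambda>\<omega>. \<Sum>j\<in>J. X j \<omega>) \<in> CZ \<Omega> Z"
  by (induction J rule: finite_induct) (auto intro: CZ_add CZ_const)

lemma CZ_max0:
  assumes X: "X \<in> CZ \<Omega> Z"
  shows "(\<lambda>\<omega>. max (X \<omega>) 0) \<in> CZ \<Omega> Z"
proof -
  obtain c where c: "c \<ge> 0" "\<forall>\<omega>\<in>\<Omega>. \<bar>X \<omega>\<bar> \<le> c * Z \<omega>" using X by (rule CZ_boundE)
  show ?thesis
    by (rule CZ_I[where c=c]) (use c CZ_continuous_on[OF X] in \<open>auto intro!: continuous_intros\<close>)
qed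

lemma CZ_min_const:
  assumes X: "X \<in> CZ \<Omega> Z"
  shows "(\<lambda>\<omega>. min (X \<omega>) r) \<in> CZ \<Omega> Z"
proof -
  have "(\<lambda>\<omega>. max (X \<omega> - r) 0) \<in> CZ \<Omega> Z" using CZ_max0[OF CZ_diff[OF X CZ_const]] .
  moreover have "(\<lambda>\<omega>. X \<omega> - max (X \<omega> - r) 0) = (\<lambda>\<omega>. min (X \<omega>) r)"
    by (rule ext) (simp add: min_def max_def)
  ultimately show ?thesis using CZ_diff[OF X] by metis
qed

lemma CZ_Z_excess: "(\<lambda>\<omega>. max (Z \<omega> - z) 0) \<in> CZ \<Omega> Z"
  using CZ_max0[OF CZ_diff[OF CZ_Z CZ_const]] .

lemma caZ_space: "\<mu> \<in> caZ \<Omega> Z \<Longrightarrow> space \<mu> = \<Omega>"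
  by (simp add: caZ_def)

lemma caZ_borel_measurable:
  assumes "\<mu> \<in> caZ \<Omega> Z" and "continuous_on \<Omega> X"
  shows "X \<in> borel_measurable \<mu>"
proof -
  have "sets \<mu> = sets (restrict_space borel \<Omega>)" using assms(1) by (simp add: caZ_def)
  then show ?thesis
    using borel_measurable_continuous_on_restrict[OF assms(2)] measurable_cong_sets by blast
qed

lemma caZ_integrable:
  assumes \<mu>: "\<mu> \<in> caZ \<Omega> Z" and X: "X \<in> CZ \<Omega> Z"
  shows "integrable \<mu> X"
proof -
  have "integrable \<mu> Z"
  proof (rule integrableI_nonneg)
    show "Z \<in> borel_measurable \<mu>" using \<mu> Z_cont by (rule caZ_borel_measurable)
    show "AE \<omega> in \<mu>. 0 \<le> Z \<omega>" using Z_ge1 caZ_space[OF \<mu>] by (intro AE_I2) force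
    show "(\<integral>\<^sup>+ \<omega>. ennreal (Z \<omega>) \<partial>\<mu>) < \<infinity>" using \<mu> by (simp add: caZ_def)
  qed
  obtain c where c: "c \<ge> 0" "\<forall>\<omega>\<in>\<Omega>. \<bar>X \<omega>\<bar> \<le> c * Z \<omega>" using X by (rule CZ_boundE)
  show ?thesis
  proof (rule Bochner_Integration.integrable_bound)
    show "integrable \<mu> (\<lambda>\<omega>. c * Z \<omega>)" using \<open>integrable \<mu> Z\<close> by simp
    show "X \<in> borel_measurable \<mu>" using \<mu> CZ_continuous_on[OF X] by (rule caZ_borel_measurable)
    show "AE \<omega> in \<mu>. norm (X \<omega>) \<le> norm (c * Z \<omega>)"
      using c Z_ge1 caZ_space[OF \<mu>] by (intro AE_I2) (force simp: abs_mult)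
  qed
qed

lemma caZ_pairing_abs_le:
  assumes \<mu>: "\<mu> \<in> caZ \<Omega> Z" and X: "X \<in> CZ \<Omega> Z" and c: "\<forall>\<omega>\<in>\<Omega>. \<bar>X \<omega>\<bar> \<le> c * Z \<omega>"
  shows "\<bar>pairing X \<mu>\<bar> \<le> c * pairing Z \<mu>"
proof -
  have "\<bar>pairing X \<mu>\<bar> \<le> (\<integral>\<omega>. \<bar>X \<omega>\<bar> \<partial>\<mu>)"
    unfolding pairing_def using integral_norm_bound[of \<mu> X] by simp
  also have "\<dots> \<le> (\<integral>\<omega>. c * Z \<omega> \<partial>\<mu>)"
    using caZ_integrable[OF \<mu> X] caZ_integrable[OF \<mu> CZ_Z] c caZ_space[OF \<mu>]
    by (intro integral_mono) auto
  also have "\<dots> = c * pairing Z \<mu>" by (simp add: pairing_def)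
  finally show ?thesis .
qed

lemma conj_CZ_ge_nat_conjugate:
  "nat_conjugate (\<lambda>n. \<psi> (\<lambda>\<omega>. real n * Z \<omega>)) (pairing Z \<mu>) \<le> conj_CZ \<Omega> Z \<psi> \<mu>"
  unfolding nat_conjugate_def
proof (rule SUP_least)
  fix n :: nat
  have "ereal (pairing (\<lambda>\<omega>. real n * Z \<omega>) \<mu> - \<psi> (\<lambda>\<omega>. real n * Z \<omega>)) \<le> conj_CZ \<Omega> Z \<psi> \<mu>"
    unfolding conj_CZ_def by (rule SUP_upper) (rule CZ_cmult[OF CZ_Z])
  then show "ereal (real n * pairing Z \<mu> - \<psi> (\<lambda>\<omega>. real n * Z \<omega>)) \<le> conj_CZ \<Omega> Z \<psi> \<mu>"
    by (simp add: pairing_def)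
qed

lemma conj_CZ_superlinear_minorant:
  "\<exists>\<phi> :: real \<Rightarrow> ereal.
      (\<forall>x\<ge>0. \<phi> x \<noteq> -\<infinity>) \<and> mono_on {0..} \<phi> \<and> ereal_convex_on {0..} \<phi>
    \<and> ((\<lambda>x. \<phi> x / ereal x) \<longlongrightarrow> \<infinity>) at_top
    \<and> (\<forall>\<mu>\<in>caZ \<Omega> Z. conj_CZ \<Omega> Z \<psi> \<mu> \<ge> \<phi> (pairing Z \<mu>))"
  using nat_conjugate_neq_MInfty mono_on_nat_conjugate ereal_convex_on_nat_conjugate
    nat_conjugate_superlinear conj_CZ_ge_nat_conjugate
  by (intro exI[of _ "nat_conjugate (\<lambda>n. \<psi> (\<lambda>\<omega>. real n * Z \<omega>))"]) blast

lemma conj_CZ_le_iff: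
  "conj_CZ \<Omega> Z \<psi> \<mu> \<le> ereal a \<longleftrightarrow> (\<forall>X\<in>CZ \<Omega> Z. pairing X \<mu> - \<psi> X \<le> a)"
  by (simp add: conj_CZ_def SUP_le_iff)

text \<open>By positive homogeneity \<open>n L((Z-z)\<^sup>+) \<le> a + \<psi>(n (Z-z)\<^sup>+) \<rightarrow> a + \<psi>(0)\<close>, so \<open>L((Z-z)\<^sup>+)\<close>
  is eventually below \<open>(|a + \<psi>(0)| + 1) / n\<close>.\<close>

lemma tight_if_dominated:
  assumes L_cmult: "\<And>X r. X \<in> CZ \<Omega> Z \<Longrightarrow> L (\<lambda>\<omega>. r * X \<omega>) = r * L X"
    and L_nonneg: "\<And>X. X \<in> CZ \<Omega> Z \<Longrightarrow> \<forall>\<omega>\<in>\<Omega>. 0 \<le> X \<omega> \<Longrightarrow> 0 \<le> L X"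
    and L_le: "\<And>X. X \<in> CZ \<Omega> Z \<Longrightarrow> L X \<le> a + \<psi> X"
    and \<psi>_lim: "\<forall>n::nat. ((\<lambda>z. \<psi> (\<lambda>\<omega>. real n * max (Z \<omega> - z) 0)) \<longlongrightarrow> \<psi> (\<lambda>\<omega>. 0)) at_top"
  shows "((\<lambda>z. L (\<lambda>\<omega>. max (Z \<omega> - z) 0)) \<longlongrightarrow> 0) at_top"
  unfolding tendsto_iff
proof (intro allI impI)
  fix e :: real assume e: "e > 0"
  obtain n :: nat where n: "(\<bar>a + \<psi> (\<lambda>\<omega>. 0)\<bar> + 1) / e < real n"
    using reals_Archimedean2 by blast
  then have npos: "real n > 0" using e by (smt (verit) divide_pos_pos)
  have ne: "\<bar>a + \<psi> (\<lambda>\<omega>. 0)\<bar> + 1 < e * real n"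
    using n e by (simp add: divide_less_eq mult.commute)
  have "eventually (\<lambda>z. \<psi> (\<lambda>\<omega>. real n * max (Z \<omega> - z) 0) < \<psi> (\<lambda>\<omega>. 0) + 1) at_top"
    using \<psi>_lim by (intro order_tendstoD(2)) auto
  then show "eventually (\<lambda>z. dist (L (\<lambda>\<omega>. max (Z \<omega> - z) 0)) 0 < e) at_top"
  proof eventually_elim
    case (elim z)
    have "real n * L (\<lambda>\<omega>. max (Z \<omega> - z) 0) = L (\<lambda>\<omega>. real n * max (Z \<omega> - z) 0)"
      using L_cmult[OF CZ_Z_excess] by simp
    also have "\<dots> \<le> a + \<psi> (\<lambda>\<omega>. real n * max (Z \<omega> - z) 0)"
      using L_le[OF CZ_cmult[OF CZ_Z_excess]] by simp
    also have "\<dots> < e * real n" using elim ne by linarith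
    finally have "L (\<lambda>\<omega>. max (Z \<omega> - z) 0) < e" using npos by (simp add: mult.commute)
    moreover have "0 \<le> L (\<lambda>\<omega>. max (Z \<omega> - z) 0)" using L_nonneg[OF CZ_Z_excess] by simp
    ultimately show ?case by simp
  qed
qed

end

locale proper_weighted_space = weighted_space \<Omega> Z for \<Omega> :: "'a::metric_space set" and Z +
  assumes Z_compact: "\<forall>z::real. 0 \<le> z \<longrightarrow> compact {\<omega>\<in>\<Omega>. Z \<omega> \<le> z}"

section \<open>Riesz representation of tight positive functionals\<close>

lemma continuous_on_squeeze_zeros:
  fixes f g :: "'a::metric_space \<Rightarrow> real"
  assumes f: "continuous_on S f" and bound: "\<forall>x\<in>S. \<bar>g x\<bar> \<le> f x"
    and g: "\<forall>x\<in>S. f x \<noteq> 0 \<longrightarrow> (g \<longlongrightarrow> g x) (at x within S)"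
  shows "continuous_on S g"
  unfolding continuous_on_def
proof
  fix x assume x: "x \<in> S"
  show "(g \<longlongrightarrow> g x) (at x within S)"
  proof (cases "f x = 0")
    case False then show ?thesis using g x by blast
  next
    case True
    then have gx: "g x = 0" using bound x by force
    have fx: "(f \<longlongrightarrow> 0) (at x within S)" using f x True unfolding continuous_on_def by force
    show ?thesis unfolding gx
    proof (rule tendsto_sandwich[where f="\<lambda>y. - f y" and h=f])
      show "\<forall>\<^sub>F y in at x within S. - f y \<le> g y" "\<forall>\<^sub>F y in at x within S. g y \<le> f y"
        using bound by (auto simp: eventually_at_filter abs_le_iff intro!: always_eventually)
      show "((\<lambda>y. - f y) \<longlongrightarrow> 0) (at x within S)" using tendsto_minus[OF fx] by simp
    qed fact
  qed
qed

lemma openin_superlevel: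
  fixes g :: "'a::topological_space \<Rightarrow> real"
  shows "continuous_on S g \<Longrightarrow> openin (top_of_set S) {x\<in>S. t < g x}"
  using continuous_openin_preimage_gen[of S g "{t<..}"] by (simp add: vimage_def Int_def)

lemma closedin_superlevel:
  fixes g :: "'a::topological_space \<Rightarrow> real"
  shows "continuous_on S g \<Longrightarrow> closedin (top_of_set S) {x\<in>S. t \<le> g x}"
  using continuous_closedin_preimage[of S g "{t..}"] by (simp add: vimage_def Int_def)

lemma mult_divide_add_bounds:
  fixes f a b :: real
  assumes "0 \<le> f" "0 \<le> a" "0 \<le> b"
  shows "0 \<le> f * a / (a + b) \<and> f * a / (a + b) \<le> f"
proof -
  have q: "0 \<le> a / (a + b)" "a / (a + b) \<le> 1" using assms by (auto simp: divide_le_eq_1)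
  have "0 \<le> f * (a / (a + b))" using assms(1) q(1) by (rule mult_nonneg_nonneg)
  moreover have "f * (a / (a + b)) \<le> f" using q(2) assms(1) by (rule mult_left_le)
  ultimately show ?thesis by simp
qed

lemma le_cutoff_add_excess:
  fixes f \<delta> z w :: real
  assumes "0 \<le> f" "f \<le> 1" "0 < \<delta>"
  shows "f \<le> \<delta> + min 1 (max 0 (z + 1 - w)) * max (f - \<delta>) 0 + max (w - z) 0"
proof -
  define c where "c = min 1 (max 0 (z + 1 - w))"
  define u where "u = max (f - \<delta>) 0"
  have u: "0 \<le> u" "u \<le> 1" "f \<le> \<delta> + u" using assms by (auto simp: u_def)
  have "(1 - c) * u \<le> 1 - c" using u by (intro mult_left_le) (auto simp: c_def)
  then have "u \<le> c * u + (1 - c)" by (simp add: algebra_simps)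
  moreover have "1 - c \<le> max (w - z) 0" unfolding c_def by (simp add: min_def max_def)
  ultimately show ?thesis using u unfolding c_def[symmetric] u_def[symmetric] by linarith
qed

definition level_slice :: "nat \<Rightarrow> nat \<Rightarrow> real \<Rightarrow> real" where
  "level_slice N j y = min (max (real N * y - real j) 0) 1"

lemma sum_level_slice:
  assumes "0 \<le> y" "y \<le> 1"
  shows "(\<Sum>j<N. level_slice N j y) = real N * y"
proof -
  have "(\<Sum>j<n. min (max (t - real j) 0) 1) = min (max t 0) (real n)" for n and t :: real
    by (induction n) (simp_all add: min_def max_def)
  moreover have "0 \<le> real N * y" "real N * y \<le> real N"
    using assms mult_left_le[of y "real N"] by simp_all
  then have "min (max (real N * y) 0) (real N) = real N * y"
    by (simp only: max_absorb1 min_absorb1)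
  ultimately show ?thesis by (simp add: level_slice_def)
qed

locale tight_positive_functional = proper_weighted_space \<Omega> Z
  for \<Omega> :: "'a::metric_space set" and Z +
  fixes L :: "('a \<Rightarrow> real) \<Rightarrow> real"
  assumes L_add: "\<And>X Y. X \<in> CZ \<Omega> Z \<Longrightarrow> Y \<in> CZ \<Omega> Z \<Longrightarrow> L (\<lambda>\<omega>. X \<omega> + Y \<omega>) = L X + L Y"
    and L_cmult: "\<And>X r. X \<in> CZ \<Omega> Z \<Longrightarrow> L (\<lambda>\<omega>. r * X \<omega>) = r * L X"
    and L_nonneg: "\<And>X. X \<in> CZ \<Omega> Z \<Longrightarrow> \<forall>\<omega>\<in>\<Omega>. 0 \<le> X \<omega> \<Longrightarrow> 0 \<le> L X"
    and L_tight: "((\<lambda>z. L (\<lambda>\<omega>. max (Z \<omega> - z) 0)) \<longlongrightarrow> 0) at_top"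
begin

lemma L_uminus: "X \<in> CZ \<Omega> Z \<Longrightarrow> L (\<lambda>\<omega>. - X \<omega>) = - L X"
  using L_cmult[of X "-1"] by simp

lemma L_diff: "X \<in> CZ \<Omega> Z \<Longrightarrow> Y \<in> CZ \<Omega> Z \<Longrightarrow> L (\<lambda>\<omega>. X \<omega> - Y \<omega>) = L X - L Y"
  using L_add[OF _ CZ_uminus, of X Y] L_uminus[of Y] by simp

lemma L_mono: "X \<in> CZ \<Omega> Z \<Longrightarrow> Y \<in> CZ \<Omega> Z \<Longrightarrow> \<forall>\<omega>\<in>\<Omega>. X \<omega> \<le> Y \<omega> \<Longrightarrow> L X \<le> L Y"
  using L_nonneg[OF CZ_diff, of Y X] L_diff[of Y X] by simp

lemma L_cong: "X \<in> CZ \<Omega> Z \<Longrightarrow> Y \<in> CZ \<Omega> Z \<Longrightarrow> \<forall>\<omega>\<in>\<Omega>. X \<omega> = Y \<omega> \<Longrightarrow> L X = L Y"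
  using L_mono[of X Y] L_mono[of Y X] by simp

lemma L_zero: "X \<in> CZ \<Omega> Z \<Longrightarrow> \<forall>\<omega>\<in>\<Omega>. X \<omega> = 0 \<Longrightarrow> L X = 0"
  using L_nonneg[of X] L_nonneg[OF CZ_uminus, of X] L_uminus[of X] by simp

lemma L_sum:
  "finite J \<Longrightarrow> (\<And>j. j \<in> J \<Longrightarrow> X j \<in> CZ \<Omega> Z) \<Longrightarrow> L (\<lambda>\<omega>. \<Sum>j\<in>J. X j \<omega>) = (\<Sum>j\<in>J. L (X j))"
proof (induction J rule: finite_induct)
  case empty
  then show ?case using L_zero[OF CZ_const, of 0] by simp
next
  case (insert j J)
  then show ?case using L_add[OF _ CZ_sum, of "X j" J X] by simp
qed

abbreviation total_mass :: real where
  "total_mass \<equiv> L (\<lambda>_. 1)"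

lemma total_mass_nonneg: "0 \<le> total_mass"
  using L_nonneg[OF CZ_const] by simp

lemma L_const: "L (\<lambda>_. c) = c * total_mass"
  using L_cmult[OF CZ_const, of c 1] by simp

lemma L_Z_excess_eventually_less:
  assumes "e > 0"
  obtains z where "z \<ge> 0" "L (\<lambda>\<omega>. max (Z \<omega> - z) 0) < e"
proof -
  have "eventually (\<lambda>z. z \<ge> 0 \<and> L (\<lambda>\<omega>. max (Z \<omega> - z) 0) < e) at_top"
    using eventually_ge_at_top[of 0] order_tendstoD(2)[OF L_tight assms] by (rule eventually_conj)
  then obtain N where "\<forall>z\<ge>N. z \<ge> 0 \<and> L (\<lambda>\<omega>. max (Z \<omega> - z) 0) < e"
    unfolding eventually_at_top_linorder by blast
  then show ?thesis using that by (meson order_refl)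
qed

abbreviation relopen :: "'a set \<Rightarrow> bool" where
  "relopen G \<equiv> openin (top_of_set \<Omega>) G"

text \<open>Rudin's \<open>f \<prec> G\<close>, but without compact support; tightness of \<open>L\<close> makes up for it.\<close>

definition unit_fns :: "'a set \<Rightarrow> ('a \<Rightarrow> real) set" where
  "unit_fns G = {f. continuous_on \<Omega> f \<and> (\<forall>x\<in>\<Omega>. 0 \<le> f x \<and> f x \<le> 1) \<and> (\<forall>x\<in>\<Omega>. x \<notin> G \<longrightarrow> f x = 0)}"

definition open_content :: "'a set \<Rightarrow> real" where
  "open_content G = (SUP f\<in>unit_fns G. L f)"

lemma unit_fns_CZ: "f \<in> unit_fns G \<Longrightarrow> f \<in> CZ \<Omega> Z"
  unfolding unit_fns_def by (rule CZ_bounded[where B=1]) auto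

lemma unit_fns_L_bounds: "f \<in> unit_fns G \<Longrightarrow> 0 \<le> L f \<and> L f \<le> total_mass"
  using L_nonneg[OF unit_fns_CZ] L_mono[OF unit_fns_CZ CZ_const] by (auto simp: unit_fns_def)

lemma zero_in_unit_fns: "(\<lambda>_. 0) \<in> unit_fns G"
  by (simp add: unit_fns_def)

lemma one_in_unit_fns: "(\<lambda>_. 1) \<in> unit_fns \<Omega>"
  by (simp add: unit_fns_def)

lemma unit_fns_mono: "G \<subseteq> H \<Longrightarrow> unit_fns G \<subseteq> unit_fns H"
  by (auto simp: unit_fns_def)

lemma bdd_above_L_unit_fns: "bdd_above (L ` unit_fns G)"
  using unit_fns_L_bounds by (auto intro!: bdd_aboveI)

lemma open_content_ge: "f \<in> unit_fns G \<Longrightarrow> L f \<le> open_content G"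
  unfolding open_content_def by (rule cSUP_upper[OF _ bdd_above_L_unit_fns])

lemma open_content_le: "(\<And>f. f \<in> unit_fns G \<Longrightarrow> L f \<le> c) \<Longrightarrow> open_content G \<le> c"
  unfolding open_content_def using zero_in_unit_fns by (intro cSUP_least) auto

lemma open_content_approx:
  assumes "e > 0"
  obtains f where "f \<in> unit_fns G" "open_content G - e < L f"
proof -
  have "open_content G - e < (SUP f\<in>unit_fns G. L f)" using assms by (simp add: open_content_def)
  then show ?thesis
    using less_cSUP_iff[OF _ bdd_above_L_unit_fns] zero_in_unit_fns that by blast
qed

lemma open_content_nonneg: "0 \<le> open_content G"
  using open_content_ge[OF zero_in_unit_fns] L_zero[OF CZ_const, of 0] by simp

lemma open_content_le_total_mass: "open_content G \<le> total_mass"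
  using unit_fns_L_bounds by (intro open_content_le) auto

lemma open_content_mono: "G \<subseteq> H \<Longrightarrow> open_content G \<le> open_content H"
  using unit_fns_mono open_content_ge by (intro open_content_le) blast

lemma open_content_empty: "open_content {} = 0"
  using L_zero[OF unit_fns_CZ] open_content_nonneg
  by (intro antisym open_content_le) (auto simp: unit_fns_def)

lemma open_content_space: "open_content \<Omega> = total_mass"
  using open_content_ge[OF one_in_unit_fns] open_content_le_total_mass[of \<Omega>] by linarith

text \<open>The case split avoids the junk value \<open>infdist x {} = 0\<close>: for relatively open \<open>G\<close>,
  \<open>sep_dist G\<close> is positive exactly on \<open>G\<close>.\<close>

definition sep_dist :: "'a set \<Rightarrow> 'a \<Rightarrow> real" where
  "sep_dist G x = (if \<Omega> - G = {} then 1 else infdist x (\<Omega> - G))"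

lemma sep_dist_nonneg: "0 \<le> sep_dist G x"
  by (simp add: sep_dist_def infdist_nonneg)

lemma sep_dist_eq_0: "x \<in> \<Omega> \<Longrightarrow> x \<notin> G \<Longrightarrow> sep_dist G x = 0"
  by (auto simp: sep_dist_def)

lemma sep_dist_pos:
  assumes G: "relopen G" and x: "x \<in> G"
  shows "0 < sep_dist G x"
proof (cases "\<Omega> - G = {}")
  case False
  obtain e where e: "e > 0" "\<forall>x'\<in>\<Omega>. dist x' x < e \<longrightarrow> x' \<in> G"
    using G x unfolding openin_euclidean_subtopology_iff by blast
  have "infdist x (\<Omega> - G) \<noteq> 0"
  proof
    assume "infdist x (\<Omega> - G) = 0"
    then have "x \<in> closure (\<Omega> - G)" using in_closure_iff_infdist_zero[OF False] by simp
    then obtain y where "y \<in> \<Omega> - G" "dist y x < e" using e(1) closure_approachable by blast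
    then show False using e by blast
  qed
  then show ?thesis using False infdist_nonneg[of x "\<Omega> - G"] by (simp add: sep_dist_def)
qed (simp add: sep_dist_def)

lemma sep_dist_add_pos:
  assumes G: "relopen G" and H: "relopen H" and x: "x \<in> G \<union> H"
  shows "0 < sep_dist G x + sep_dist H x"
  using x
proof
  assume "x \<in> G"
  then show ?thesis using sep_dist_pos[OF G] sep_dist_nonneg[of H x] by (simp add: add_pos_nonneg)
next
  assume "x \<in> H"
  then show ?thesis using sep_dist_pos[OF H] sep_dist_nonneg[of G x] by (simp add: add_nonneg_pos)
qed

lemma sep_dist_tendsto: "(sep_dist G \<longlongrightarrow> sep_dist G x) (at x within S)"
proof -
  have "continuous_on UNIV (sep_dist G)"
    unfolding sep_dist_def by (cases "\<Omega> - G = {}") (auto intro!: continuous_intros)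
  then show ?thesis unfolding continuous_on_def
    by (meson UNIV_I tendsto_within_subset top_greatest)
qed

lemma unit_fns_share:
  assumes G: "relopen G" and H: "relopen H" and f: "f \<in> unit_fns (G \<union> H)"
  shows "(\<lambda>x. f x * sep_dist G x / (sep_dist G x + sep_dist H x)) \<in> unit_fns G"
    (is "?g \<in> _")
proof -
  let ?a = "sep_dist G" and ?b = "sep_dist H"
  have fc: "continuous_on \<Omega> f" and f01: "\<forall>x\<in>\<Omega>. 0 \<le> f x \<and> f x \<le> 1"
    and f0: "\<forall>x\<in>\<Omega>. x \<notin> G \<union> H \<longrightarrow> f x = 0" using f by (auto simp: unit_fns_def)
  have g: "0 \<le> ?g x \<and> ?g x \<le> f x" if "x \<in> \<Omega>" for x
    using mult_divide_add_bounds[of "f x" "?a x" "?b x"] f01 that sep_dist_nonneg by auto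
  show ?thesis
    unfolding unit_fns_def
  proof (intro CollectI conjI ballI impI)
    show "continuous_on \<Omega> ?g"
    proof (rule continuous_on_squeeze_zeros[OF fc])
      show "\<forall>x\<in>\<Omega>. \<bar>?g x\<bar> \<le> f x"
      proof
        fix x assume "x \<in> \<Omega>"
        then have "0 \<le> ?g x" "?g x \<le> f x" using g by auto
        then show "\<bar>?g x\<bar> \<le> f x" by (simp only: abs_of_nonneg)
      qed
      show "\<forall>x\<in>\<Omega>. f x \<noteq> 0 \<longrightarrow> (?g \<longlongrightarrow> ?g x) (at x within \<Omega>)"
      proof (intro ballI impI)
        fix x assume x: "x \<in> \<Omega>" "f x \<noteq> 0"
        then have "?a x + ?b x \<noteq> 0" using f0 sep_dist_add_pos[OF G H, of x] by force
        moreover have "(f \<longlongrightarrow> f x) (at x within \<Omega>)" using fc x by (simp add: continuous_on_def)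
        ultimately show "(?g \<longlongrightarrow> ?g x) (at x within \<Omega>)" by (intro tendsto_intros sep_dist_tendsto)
      qed
    qed
    fix x assume x: "x \<in> \<Omega>"
    show "0 \<le> ?g x" "?g x \<le> 1" using g[OF x] f01 x by auto
    assume "x \<notin> G"
    then show "?g x = 0" by (simp add: sep_dist_eq_0[OF x])
  qed
qed

lemma unit_fns_Un_split:
  assumes G: "relopen G" and H: "relopen H" and f: "f \<in> unit_fns (G \<union> H)"
  obtains g h where "g \<in> unit_fns G" "h \<in> unit_fns H" "\<forall>x\<in>\<Omega>. f x = g x + h x"
proof -
  let ?a = "sep_dist G" and ?b = "sep_dist H"
  have "(\<lambda>x. f x * ?a x / (?a x + ?b x)) \<in> unit_fns G" using unit_fns_share[OF G H f] .
  moreover have "(\<lambda>x. f x * ?b x / (?b x + ?a x)) \<in> unit_fns H"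
    using unit_fns_share[OF H G] f by (simp add: Un_commute)
  moreover have "f x = f x * ?a x / (?a x + ?b x) + f x * ?b x / (?b x + ?a x)" if x: "x \<in> \<Omega>" for x
  proof (cases "?a x + ?b x = 0")
    case True
    then have "x \<notin> G \<union> H" using sep_dist_add_pos[OF G H, of x] by auto
    then show ?thesis using f x by (auto simp: unit_fns_def)
  next
    case False
    then show ?thesis by (simp add: add.commute add_divide_distrib[symmetric] distrib_left[symmetric])
  qed
  ultimately show ?thesis using that by blast
qed

lemma open_content_Un_le:
  assumes "relopen G" "relopen H"
  shows "open_content (G \<union> H) \<le> open_content G + open_content H"
proof (rule open_content_le)
  fix f assume f: "f \<in> unit_fns (G \<union> H)"
  obtain g h where gh: "g \<in> unit_fns G" "h \<in> unit_fns H" "\<forall>x\<in>\<Omega>. f x = g x + h x"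
    using unit_fns_Un_split[OF assms f] .
  have "L f = L (\<lambda>x. g x + h x)" using gh f by (intro L_cong unit_fns_CZ CZ_add) auto
  also have "\<dots> = L g + L h" using gh by (intro L_add unit_fns_CZ)
  also have "\<dots> \<le> open_content G + open_content H" using gh by (intro add_mono open_content_ge)
  finally show "L f \<le> open_content G + open_content H" .
qed

lemma open_content_UN_lessThan_le:
  fixes m :: nat
  assumes "\<And>i. i < m \<Longrightarrow> relopen (G i)"
  shows "open_content (\<Union>i<m. G i) \<le> (\<Sum>i<m. open_content (G i))"
  using assms
proof (induction m)
  case 0
  then show ?case by (simp add: open_content_empty)
next
  case (Suc m)
  have "open_content (\<Union>i<Suc m. G i) = open_content (G m \<union> (\<Union>i<m. G i))"
    by (simp add: lessThan_Suc Un_commute)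
  also have "\<dots> \<le> open_content (G m) + open_content (\<Union>i<m. G i)"
    using Suc.prems by (intro open_content_Un_le openin_Union) auto
  also have "\<dots> \<le> open_content (G m) + (\<Sum>i<m. open_content (G i))" using Suc by simp
  finally show ?case by (simp add: add.commute)
qed

lemma unit_fns_compact_cover:
  fixes G :: "nat \<Rightarrow> 'a set"
  assumes G: "\<And>i. relopen (G i)" and f: "f \<in> unit_fns (\<Union>i. G i)" and "\<delta> > 0" "0 \<le> z"
  obtains m where "{x\<in>\<Omega>. Z x \<le> z \<and> \<delta> \<le> f x} \<subseteq> (\<Union>i<m. G i)"
proof -
  define K where "K = {x\<in>\<Omega>. Z x \<le> z}"
  have "compact K" unfolding K_def using Z_compact \<open>0 \<le> z\<close> by blast
  moreover have "closedin (top_of_set K) (K \<inter> f -` {\<delta>..})"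
    using f by (intro continuous_closedin_preimage)
      (auto simp: K_def unit_fns_def intro: continuous_on_subset)
  ultimately have compact: "compact (K \<inter> f -` {\<delta>..})" using closedin_compact by blast
  obtain U where U: "\<And>i. open (U i)" and G_eq: "\<And>i. G i = \<Omega> \<inter> U i"
    using G unfolding openin_open by metis
  have "K \<inter> f -` {\<delta>..} \<subseteq> (\<Union>i. U i)"
  proof
    fix x assume "x \<in> K \<inter> f -` {\<delta>..}"
    then have "x \<in> \<Omega>" "f x \<noteq> 0" using \<open>\<delta> > 0\<close> by (auto simp: K_def)
    then obtain i where "x \<in> G i" using f by (auto simp: unit_fns_def)
    then show "x \<in> (\<Union>i. U i)" using G_eq[of i] by blast
  qed
  then obtain I where I: "finite I" "K \<inter> f -` {\<delta>..} \<subseteq> (\<Union>i\<in>I. U i)"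
    using compactE_image[OF compact, of UNIV U] U by auto
  obtain m where m: "I \<subseteq> {..<m}" using finite_nat_bounded[OF I(1)] by blast
  have "{x\<in>\<Omega>. Z x \<le> z \<and> \<delta> \<le> f x} \<subseteq> (\<Union>i<m. G i)"
  proof
    fix x assume x: "x \<in> {x\<in>\<Omega>. Z x \<le> z \<and> \<delta> \<le> f x}"
    then have "x \<in> K \<inter> f -` {\<delta>..}" by (simp add: K_def)
    then obtain i where "i \<in> I" "x \<in> U i" using I(2) by blast
    then show "x \<in> (\<Union>i<m. G i)" using x G_eq[of i] m by blast
  qed
  then show ?thesis by (rule that)
qed

lemma unit_fns_cutoff:
  assumes f: "f \<in> unit_fns G" and "\<delta> > 0" and cover: "{x\<in>\<Omega>. Z x \<le> z + 1 \<and> \<delta> \<le> f x} \<subseteq> H"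
  shows "(\<lambda>x. min 1 (max 0 (z + 1 - Z x)) * max (f x - \<delta>) 0) \<in> unit_fns H"
  unfolding unit_fns_def
proof (intro CollectI conjI ballI impI)
  show "continuous_on \<Omega> (\<lambda>x. min 1 (max 0 (z + 1 - Z x)) * max (f x - \<delta>) 0)"
    using f Z_cont by (auto simp: unit_fns_def intro!: continuous_intros)
  fix x assume x: "x \<in> \<Omega>"
  have "0 \<le> max (f x - \<delta>) 0" "max (f x - \<delta>) 0 \<le> 1" using f x \<open>\<delta> > 0\<close> by (auto simp: unit_fns_def)
  then show "0 \<le> min 1 (max 0 (z + 1 - Z x)) * max (f x - \<delta>) 0"
    "min 1 (max 0 (z + 1 - Z x)) * max (f x - \<delta>) 0 \<le> 1"
    by (auto intro: mult_le_one)
  assume "x \<notin> H"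
  then have "Z x > z + 1 \<or> f x < \<delta>" using x cover by force
  then show "min 1 (max 0 (z + 1 - Z x)) * max (f x - \<delta>) 0 = 0" by auto
qed

text \<open>Off the compact set \<open>{Z \<le> z + 1, f \<ge> \<delta>}\<close>, \<open>f\<close> is at most \<open>\<delta>\<close> plus the excess \<open>(Z - z)\<^sup>+\<close>,
  whose \<open>L\<close>-value is small by tightness.\<close>

lemma L_le_open_content_UN_approx:
  fixes G :: "nat \<Rightarrow> 'a set"
  assumes G: "\<And>i. relopen (G i)" and f: "f \<in> unit_fns (\<Union>i. G i)" and e: "e > 0"
  obtains m where "L f \<le> (\<Sum>i<m. open_content (G i)) + e"
proof -
  define \<delta> where "\<delta> = e / (2 * (total_mass + 1))"
  have \<delta>: "\<delta> > 0" "\<delta> * total_mass \<le> e / 2"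
    using e total_mass_nonneg by (auto simp: \<delta>_def field_simps)
  have "e / 2 > 0" using e by simp
  then obtain z where z: "z \<ge> 0" "L (\<lambda>\<omega>. max (Z \<omega> - z) 0) < e / 2"
    by (rule L_Z_excess_eventually_less)
  have "0 \<le> z + 1" using z(1) by simp
  then obtain m where m: "{x\<in>\<Omega>. Z x \<le> z + 1 \<and> \<delta> \<le> f x} \<subseteq> (\<Union>i<m. G i)"
    by (rule unit_fns_compact_cover[OF G f \<delta>(1)])
  define g where "g x = min 1 (max 0 (z + 1 - Z x)) * max (f x - \<delta>) 0" for x
  have g: "g \<in> unit_fns (\<Union>i<m. G i)" unfolding g_def using f \<delta>(1) m by (rule unit_fns_cutoff)
  have f01: "\<forall>x\<in>\<Omega>. 0 \<le> f x \<and> f x \<le> 1" using f by (simp add: unit_fns_def)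
  have pointwise: "f x \<le> \<delta> + g x + max (Z x - z) 0" if "x \<in> \<Omega>" for x
    using le_cutoff_add_excess[of "f x" \<delta> z "Z x"] f01 \<delta>(1) that by (simp add: g_def)
  have gC: "g \<in> CZ \<Omega> Z" by (rule unit_fns_CZ[OF g])
  have "L f \<le> L (\<lambda>x. (\<delta> + g x) + max (Z x - z) 0)"
    using pointwise by (intro L_mono unit_fns_CZ[OF f] CZ_add CZ_const gC CZ_Z_excess) auto
  also have "\<dots> = \<delta> * total_mass + L g + L (\<lambda>\<omega>. max (Z \<omega> - z) 0)"
    by (simp add: L_add CZ_add CZ_const gC CZ_Z_excess L_const[of \<delta>])
  also have "L g \<le> (\<Sum>i<m. open_content (G i))"
    using open_content_ge[OF g] open_content_UN_lessThan_le[of m G, OF G] by linarith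
  finally show ?thesis using \<delta> z by (intro that[of m]) linarith
qed

lemma open_content_UN_le:
  fixes G :: "nat \<Rightarrow> 'a set"
  assumes G: "\<And>i. relopen (G i)"
  shows "ennreal (open_content (\<Union>i. G i)) \<le> (\<Sum>i. ennreal (open_content (G i)))"
proof -
  have L_le: "ennreal (L f) \<le> (\<Sum>i. ennreal (open_content (G i)))" if f: "f \<in> unit_fns (\<Union>i. G i)" for f
  proof (rule ennreal_le_epsilon)
    fix e :: real assume e: "0 < e"
    obtain m where m: "L f \<le> (\<Sum>i<m. open_content (G i)) + e"
      using L_le_open_content_UN_approx[OF G f e] .
    have "ennreal (L f) \<le> ennreal ((\<Sum>i<m. open_content (G i)) + e)" using m by (rule ennreal_leI)
    also have "\<dots> = (\<Sum>i<m. ennreal (open_content (G i))) + ennreal e"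
      using e open_content_nonneg by (simp add: ennreal_plus sum_nonneg sum_ennreal)
    also have "(\<Sum>i<m. ennreal (open_content (G i))) \<le> (\<Sum>i. ennreal (open_content (G i)))"
      by (intro sum_le_suminf summableI) auto
    finally show "ennreal (L f) \<le> (\<Sum>i. ennreal (open_content (G i))) + ennreal e" by simp
  qed
  show ?thesis
  proof (cases "(\<Sum>i. ennreal (open_content (G i))) = top")
    case False
    then obtain s where s: "(\<Sum>i. ennreal (open_content (G i))) = ennreal s" "0 \<le> s"
      using ennreal_cases[of "\<Sum>i. ennreal (open_content (G i))"] by auto
    have "open_content (\<Union>i. G i) \<le> s"
      using L_le s by (intro open_content_le) (metis ennreal_le_iff)
    then show ?thesis using s by (simp add: ennreal_leI)
  qed simp
qed

definition outer_content :: "'a set \<Rightarrow> real" where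
  "outer_content A = (INF G\<in>{G. relopen G \<and> A \<subseteq> G}. open_content G)"

lemma bdd_below_content: "bdd_below (open_content ` {G. relopen G \<and> A \<subseteq> G})"
  using open_content_nonneg by (auto intro!: bdd_belowI)

lemma outer_content_le: "relopen G \<Longrightarrow> A \<subseteq> G \<Longrightarrow> outer_content A \<le> open_content G"
  unfolding outer_content_def by (rule cINF_lower[OF bdd_below_content]) auto

lemma outer_content_ge:
  "A \<subseteq> \<Omega> \<Longrightarrow> (\<And>G. relopen G \<Longrightarrow> A \<subseteq> G \<Longrightarrow> c \<le> open_content G) \<Longrightarrow> c \<le> outer_content A"
  unfolding outer_content_def by (rule cINF_greatest) auto

lemma outer_content_approx:
  assumes "A \<subseteq> \<Omega>" "e > 0"
  obtains G where "relopen G" "A \<subseteq> G" "open_content G < outer_content A + e"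
proof -
  have "{G. relopen G \<and> A \<subseteq> G} \<noteq> {}" using assms(1) by auto
  moreover have "(INF G\<in>{G. relopen G \<and> A \<subseteq> G}. open_content G) < outer_content A + e"
    using assms(2) by (simp add: outer_content_def)
  ultimately show ?thesis using cINF_less_iff[OF _ bdd_below_content] that by blast
qed

lemma outer_content_open: "relopen G \<Longrightarrow> outer_content G = open_content G"
  using outer_content_le[of G G] outer_content_ge[of G "open_content G"] open_content_mono
  by (meson antisym order_refl openin_imp_subset)

lemma outer_content_nonneg: "A \<subseteq> \<Omega> \<Longrightarrow> 0 \<le> outer_content A"
  using open_content_nonneg by (intro outer_content_ge) auto

lemma outer_content_mono: "A \<subseteq> B \<Longrightarrow> B \<subseteq> \<Omega> \<Longrightarrow> outer_content A \<le> outer_content B"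
  using outer_content_le by (intro outer_content_ge) auto

lemma outer_content_le_total_mass: "A \<subseteq> \<Omega> \<Longrightarrow> outer_content A \<le> total_mass"
  using outer_content_le[of \<Omega> A] open_content_space by simp

lemma outer_content_UN_le:
  fixes A :: "nat \<Rightarrow> 'a set"
  assumes A: "range A \<subseteq> Pow \<Omega>"
  shows "ennreal (outer_content (\<Union>i. A i)) \<le> (\<Sum>i. ennreal (outer_content (A i)))"
proof (rule ennreal_le_epsilon)
  fix e :: real assume e: "0 < e"
  have "\<exists>G. relopen G \<and> A n \<subseteq> G \<and> open_content G < outer_content (A n) + e * (1/2)^Suc n" for n
  proof -
    have "A n \<subseteq> \<Omega>" "e * (1/2)^Suc n > 0" using A e by auto
    then obtain G where "relopen G" "A n \<subseteq> G"
        "open_content G < outer_content (A n) + e * (1/2)^Suc n"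
      by (rule outer_content_approx)
    then show ?thesis by blast
  qed
  then obtain G where G: "\<And>n. relopen (G n) \<and> A n \<subseteq> G n
                                \<and> open_content (G n) < outer_content (A n) + e * (1/2)^Suc n"
    by metis
  have "ennreal (outer_content (\<Union>i. A i)) \<le> ennreal (open_content (\<Union>n. G n))"
    using G by (intro ennreal_leI outer_content_le openin_Union) blast+
  also have "\<dots> \<le> (\<Sum>n. ennreal (open_content (G n)))" using G by (intro open_content_UN_le) auto
  also have "\<dots> \<le> (\<Sum>n. ennreal (outer_content (A n)) + ennreal (e * (1/2)^Suc n))"
  proof (intro suminf_le allI)
    fix n
    have "0 \<le> outer_content (A n)" using A by (intro outer_content_nonneg) auto
    have "ennreal (open_content (G n)) \<le> ennreal (outer_content (A n) + e * (1/2)^Suc n)"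
      using G[of n] by (intro ennreal_leI) simp
    also have "\<dots> = ennreal (outer_content (A n)) + ennreal (e * (1/2)^Suc n)"
      using \<open>0 \<le> outer_content (A n)\<close> e by (intro ennreal_plus) auto
    finally show "ennreal (open_content (G n)) \<le> ennreal (outer_content (A n)) + ennreal (e * (1/2)^Suc n)" .
  qed auto
  also have "\<dots> = (\<Sum>n. ennreal (outer_content (A n))) + (\<Sum>n. ennreal (e * (1/2)^Suc n))"
    by (simp add: suminf_add)
  also have "(\<Sum>n. ennreal (e * (1/2)^Suc n)) = ennreal (e * 1)"
    using e by (intro suminf_ennreal_eq sums_mult power_half_series) auto
  finally show "ennreal (outer_content (\<Union>i. A i)) \<le> (\<Sum>i. ennreal (outer_content (A i))) + ennreal e"
    by simp
qed

lemma outer_measure_space_outer_content: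
  "outer_measure_space (Pow \<Omega>) (\<lambda>A. ennreal (outer_content A))"
  unfolding outer_measure_space_def
proof (intro conjI)
  show "positive (Pow \<Omega>) (\<lambda>A. ennreal (outer_content A))"
    using outer_content_open[of "{}"] by (simp add: positive_def open_content_empty)
  show "increasing (Pow \<Omega>) (\<lambda>A. ennreal (outer_content A))"
    unfolding increasing_def
  proof (intro ballI impI)
    fix A B assume "A \<in> Pow \<Omega>" "B \<in> Pow \<Omega>" "A \<subseteq> B"
    then show "ennreal (outer_content A) \<le> ennreal (outer_content B)"
      by (intro ennreal_leI outer_content_mono) auto
  qed
  show "countably_subadditive (Pow \<Omega>) (\<lambda>A. ennreal (outer_content A))"
    unfolding countably_subadditive_def by (intro allI impI outer_content_UN_le)
qed

lemma unit_fns_add_excess: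
  assumes f: "f \<in> unit_fns H" and g: "g \<in> unit_fns (H - {x\<in>\<Omega>. \<delta> \<le> f x})" and "\<delta> > 0"
  shows "(\<lambda>x. max (f x - \<delta>) 0 + g x) \<in> unit_fns H"
  unfolding unit_fns_def
proof (intro CollectI conjI ballI impI)
  show "continuous_on \<Omega> (\<lambda>x. max (f x - \<delta>) 0 + g x)"
    using f g by (auto simp: unit_fns_def intro!: continuous_intros)
  fix x assume x: "x \<in> \<Omega>"
  show "0 \<le> max (f x - \<delta>) 0 + g x" using g x by (auto simp: unit_fns_def)
  show "max (f x - \<delta>) 0 + g x \<le> 1"
    using f g x \<open>\<delta> > 0\<close> by (cases "\<delta> \<le> f x") (auto simp: unit_fns_def)
  assume "x \<notin> H"
  then show "max (f x - \<delta>) 0 + g x = 0" using f g x \<open>\<delta> > 0\<close> by (auto simp: unit_fns_def)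
qed

lemma open_content_Int_add_outer_content_Diff_le:
  assumes G: "relopen G" and H: "relopen H"
  shows "open_content (H \<inter> G) + outer_content (H - G) \<le> open_content H"
proof (rule field_le_epsilon)
  fix e3 :: real assume "0 < e3"
  define e where "e = e3 / 3"
  have e: "e > 0" using \<open>0 < e3\<close> by (simp add: e_def)
  define \<delta> where "\<delta> = e / (total_mass + 1)"
  have \<delta>: "\<delta> > 0" "\<delta> * total_mass \<le> e"
    using e total_mass_nonneg by (auto simp: \<delta>_def field_simps)
  obtain f where f: "f \<in> unit_fns (H \<inter> G)" "open_content (H \<inter> G) - e < L f"
    using open_content_approx[OF e] .
  define W where "W = H - {x\<in>\<Omega>. \<delta> \<le> f x}"
  have W: "relopen W"
    unfolding W_def using H f by (intro openin_diff closedin_superlevel) (auto simp: unit_fns_def)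
  have "H - G \<subseteq> W"
    using f \<delta> openin_imp_subset[OF H] by (auto simp: W_def unit_fns_def)
  then have outer_le: "outer_content (H - G) \<le> open_content W" by (rule outer_content_le[OF W])
  obtain g where g: "g \<in> unit_fns W" "open_content W - e < L g" using open_content_approx[OF e] .
  have fC: "(\<lambda>x. max (f x - \<delta>) 0) \<in> CZ \<Omega> Z"
    using f unit_fns_CZ by (intro CZ_max0 CZ_diff CZ_const) auto
  have "L f \<le> L (\<lambda>x. max (f x - \<delta>) 0 + \<delta>)"
    using f by (intro L_mono unit_fns_CZ CZ_add fC CZ_const) auto
  also have "\<dots> = L (\<lambda>x. max (f x - \<delta>) 0) + \<delta> * total_mass"
    by (simp add: L_add fC CZ_const L_const[of \<delta>])
  finally have "L f \<le> L (\<lambda>x. max (f x - \<delta>) 0) + \<delta> * total_mass" .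
  moreover have "L (\<lambda>x. max (f x - \<delta>) 0) + L g \<le> open_content H"
  proof -
    have "f \<in> unit_fns H" using f(1) unit_fns_mono[of "H \<inter> G" H] by blast
    then have "(\<lambda>x. max (f x - \<delta>) 0 + g x) \<in> unit_fns H"
      using unit_fns_add_excess g(1)[unfolded W_def] \<delta>(1) by blast
    then show ?thesis using open_content_ge L_add[OF fC unit_fns_CZ[OF g(1)]] by fastforce
  qed
  ultimately show "open_content (H \<inter> G) + outer_content (H - G) \<le> open_content H + e3"
    using f(2) g(2) \<delta> outer_le by (simp add: e_def)
qed

lemma relopen_in_lambda_system:
  assumes G: "relopen G"
  shows "G \<in> lambda_system \<Omega> (Pow \<Omega>) (\<lambda>A. ennreal (outer_content A))"
  unfolding lambda_system_def
proof (intro CollectI conjI ballI)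
  show "G \<in> Pow \<Omega>" using openin_imp_subset[OF G] by simp
  fix A assume A: "A \<in> Pow \<Omega>"
  have "ennreal (outer_content A) \<le> ennreal (outer_content (G \<inter> A)) + ennreal (outer_content ((\<Omega> - G) \<inter> A))"
  proof -
    have "subadditive (Pow \<Omega>) (\<lambda>A. ennreal (outer_content A))"
      using outer_measure_space_outer_content unfolding outer_measure_space_def
      by (intro ring_of_sets.countably_subadditive_subadditive[OF ring_of_sets_Pow]) auto
    then have "ennreal (outer_content ((G \<inter> A) \<union> ((\<Omega> - G) \<inter> A)))
               \<le> ennreal (outer_content (G \<inter> A)) + ennreal (outer_content ((\<Omega> - G) \<inter> A))"
      using A by (intro subadditiveD) auto
    moreover have "(G \<inter> A) \<union> ((\<Omega> - G) \<inter> A) = A" using A by auto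
    ultimately show ?thesis by simp
  qed
  moreover have "outer_content (G \<inter> A) + outer_content ((\<Omega> - G) \<inter> A) \<le> outer_content A"
  proof (rule outer_content_ge)
    show "A \<subseteq> \<Omega>" using A by simp
    fix H assume H: "relopen H" "A \<subseteq> H"
    have "outer_content (G \<inter> A) \<le> open_content (H \<inter> G)"
      using H G by (intro outer_content_le) (auto simp: openin_Int)
    moreover have "outer_content ((\<Omega> - G) \<inter> A) \<le> outer_content (H - G)"
      using H openin_imp_subset[OF H(1)] by (intro outer_content_mono) auto
    ultimately show "outer_content (G \<inter> A) + outer_content ((\<Omega> - G) \<inter> A) \<le> open_content H"
      using open_content_Int_add_outer_content_Diff_le[OF G H(1)] by linarith
  qed
  then have "ennreal (outer_content (G \<inter> A)) + ennreal (outer_content ((\<Omega> - G) \<inter> A)) \<le> ennreal (outer_content A)"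
    using A by (subst ennreal_plus[symmetric]) (auto intro!: ennreal_leI outer_content_nonneg)
  ultimately show "ennreal (outer_content (G \<inter> A)) + ennreal (outer_content ((\<Omega> - G) \<inter> A)) = ennreal (outer_content A)"
    by (rule antisym[rotated])
qed

lemma space_in_borel: "\<Omega> \<in> sets borel"
proof -
  have "\<Omega> = (\<Union>n::nat. {x\<in>\<Omega>. Z x \<le> real n})"
  proof (intro equalityI subsetI)
    fix x assume "x \<in> \<Omega>"
    moreover obtain n :: nat where "Z x \<le> real n" using real_arch_simple by blast
    ultimately show "x \<in> (\<Union>n::nat. {x\<in>\<Omega>. Z x \<le> real n})" by blast
  qed auto
  also have "\<dots> \<in> sets borel"
  proof (rule sets.countable_UN)
    have "{x\<in>\<Omega>. Z x \<le> real n} \<in> sets borel" for n :: nat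
      using Z_compact by (intro borel_closed compact_imp_closed) auto
    then show "range (\<lambda>n::nat. {x\<in>\<Omega>. Z x \<le> real n}) \<subseteq> sets borel" by blast
  qed
  finally show ?thesis .
qed

lemma sets_restrict_space_borel_eq:
  "sets (restrict_space borel \<Omega>) = sigma_sets \<Omega> ((\<inter>) \<Omega> ` {S. open S})"
proof -
  have "sets (restrict_space borel \<Omega>) = (\<inter>) \<Omega> ` sigma_sets UNIV {S. open S}"
    by (simp add: sets_restrict_space sets_borel)
  also have "\<dots> = sigma_sets \<Omega> ((\<inter>) \<Omega> ` {S. open S})"
    using space_in_borel by (intro sigma_sets_Int) (auto simp: sets_borel)
  finally show ?thesis .
qed

lemma relopen_in_sets: "relopen G \<Longrightarrow> G \<in> sets (restrict_space borel \<Omega>)"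
  unfolding sets_restrict_space_borel_eq openin_open by (auto intro: sigma_sets.Basic)

lemma closedin_in_sets:
  assumes F: "closedin (top_of_set \<Omega>) F"
  shows "F \<in> sets (restrict_space borel \<Omega>)"
proof -
  have "\<Omega> - (\<Omega> - F) \<in> sets (restrict_space borel \<Omega>)"
    using F sets.compl_sets[of "\<Omega> - F" "restrict_space borel \<Omega>"] relopen_in_sets
    by (simp add: closedin_def space_restrict_space)
  moreover have "\<Omega> - (\<Omega> - F) = F" using closedin_subset[OF F] by auto
  ultimately show ?thesis by simp
qed

lemma sigma_algebra_restrict_space_borel: "sigma_algebra \<Omega> (sets (restrict_space borel \<Omega>))"
  using sets.sigma_algebra_axioms[of "restrict_space borel \<Omega>"] by (simp add: space_restrict_space)

lemma measure_space_outer_content: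
  "measure_space \<Omega> (sets (restrict_space borel \<Omega>)) (\<lambda>A. ennreal (outer_content A))"
proof -
  let ?\<Lambda> = "lambda_system \<Omega> (Pow \<Omega>) (\<lambda>A. ennreal (outer_content A))"
  have ms: "measure_space \<Omega> ?\<Lambda> (\<lambda>A. ennreal (outer_content A))"
    by (rule sigma_algebra.caratheodory_lemma[OF sigma_algebra_Pow outer_measure_space_outer_content])
  then have "sigma_algebra \<Omega> ?\<Lambda>" by (simp add: measure_space_def)
  then have "sets (restrict_space borel \<Omega>) \<subseteq> ?\<Lambda>"
    unfolding sets_restrict_space_borel_eq
    by (rule sigma_algebra.sigma_sets_subset)
       (auto simp: openin_open intro!: relopen_in_lambda_system)
  then show ?thesis by (rule measure_down[OF ms sigma_algebra_restrict_space_borel])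
qed

definition riesz_measure :: "'a measure" where
  "riesz_measure = measure_of \<Omega> (sets (restrict_space borel \<Omega>)) (\<lambda>A. ennreal (outer_content A))"

lemma sets_restrict_space_borel_subset: "sets (restrict_space borel \<Omega>) \<subseteq> Pow \<Omega>"
  using sets.space_closed[of "restrict_space borel \<Omega>"] by (simp add: space_restrict_space)

lemma sets_riesz_measure: "sets riesz_measure = sets (restrict_space borel \<Omega>)"
  unfolding riesz_measure_def using sets_restrict_space_borel_subset
    sigma_algebra.sigma_sets_eq[OF sigma_algebra_restrict_space_borel]
  by (simp add: sets_measure_of)

lemma space_riesz_measure: "space riesz_measure = \<Omega>"
  unfolding riesz_measure_def using sets_restrict_space_borel_subset by (simp add: space_measure_of)

lemma emeasure_riesz_measure:
  "A \<in> sets (restrict_space borel \<Omega>) \<Longrightarrow> emeasure riesz_measure A = ennreal (outer_content A)"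
  unfolding riesz_measure_def using measure_space_outer_content
  by (intro emeasure_measure_of_sigma[OF sigma_algebra_restrict_space_borel])
     (auto simp: measure_space_def)

lemma measure_riesz_measure:
  "A \<in> sets (restrict_space borel \<Omega>) \<Longrightarrow> measure riesz_measure A = outer_content A"
  using emeasure_riesz_measure[of A] sets_restrict_space_borel_subset outer_content_nonneg
  by (auto simp: measure_def)

lemma finite_measure_riesz_measure: "finite_measure riesz_measure"
proof (rule finite_measureI)
  have "\<Omega> \<in> sets (restrict_space borel \<Omega>)"
    using sets.top[of "restrict_space borel \<Omega>"] by (simp add: space_restrict_space)
  then show "emeasure riesz_measure (space riesz_measure) \<noteq> \<infinity>"
    by (simp add: space_riesz_measure emeasure_riesz_measure)
qed

lemma riesz_measure_borel_measurable:
  "continuous_on \<Omega> f \<Longrightarrow> f \<in> borel_measurable riesz_measure"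
  using borel_measurable_continuous_on_restrict measurable_cong_sets[OF sets_riesz_measure refl]
  by blast

lemma riesz_measure_integrable_unit:
  fixes f :: "'a \<Rightarrow> real"
  assumes "continuous_on \<Omega> f" and "\<forall>x\<in>\<Omega>. 0 \<le> f x \<and> f x \<le> 1"
  shows "integrable riesz_measure f"
proof (rule finite_measure.integrable_const_bound[OF finite_measure_riesz_measure])
  show "AE x in riesz_measure. norm (f x) \<le> 1"
    using assms(2) by (intro AE_I2) (auto simp: space_riesz_measure)
  show "f \<in> borel_measurable riesz_measure" using assms(1) by (rule riesz_measure_borel_measurable)
qed

lemma L_le_outer_content: "relopen G \<Longrightarrow> f \<in> unit_fns G \<Longrightarrow> L f \<le> outer_content G"
  using open_content_ge outer_content_open by simp

lemma outer_content_closedin_shrink_le: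
  assumes F: "closedin (top_of_set \<Omega>) F" and h: "h \<in> CZ \<Omega> Z"
    and h01: "\<forall>x\<in>\<Omega>. 0 \<le> h x \<and> h x \<le> 1" and h1: "\<forall>x\<in>F. h x = 1"
    and \<epsilon>: "0 < \<epsilon>" "\<epsilon> < 1"
  shows "(1 - \<epsilon>) * outer_content F \<le> L h"
proof -
  define V where "V = {x\<in>\<Omega>. 1 - \<epsilon> < h x}"
  have V: "relopen V" unfolding V_def using CZ_continuous_on[OF h] by (rule openin_superlevel)
  have "F \<subseteq> V" using h1 closedin_subset[OF F] \<epsilon> by (auto simp: V_def)
  then have "outer_content F \<le> open_content V" by (rule outer_content_le[OF V])
  also have "open_content V \<le> L h / (1 - \<epsilon>)"
  proof (rule open_content_le)
    fix g assume g: "g \<in> unit_fns V"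
    have "g x \<le> h x / (1 - \<epsilon>)" if x: "x \<in> \<Omega>" for x
    proof (cases "x \<in> V")
      case True
      then have "1 \<le> h x / (1 - \<epsilon>)" using \<epsilon> by (simp add: V_def field_simps)
      moreover have "g x \<le> 1" using g x by (simp add: unit_fns_def)
      ultimately show ?thesis by linarith
    next
      case False
      then show ?thesis using g x h01 \<epsilon> by (auto simp: unit_fns_def)
    qed
    then have "L g \<le> L (\<lambda>x. (1 / (1 - \<epsilon>)) * h x)"
      by (intro L_mono unit_fns_CZ[OF g] CZ_cmult[OF h]) auto
    then show "L g \<le> L h / (1 - \<epsilon>)" using L_cmult[OF h, of "1 / (1 - \<epsilon>)"] by simp
  qed
  finally show ?thesis using \<epsilon> by (simp add: field_simps)
qed

lemma outer_content_closedin_le: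
  assumes F: "closedin (top_of_set \<Omega>) F" and h: "h \<in> CZ \<Omega> Z"
    and h01: "\<forall>x\<in>\<Omega>. 0 \<le> h x \<and> h x \<le> 1" and h1: "\<forall>x\<in>F. h x = 1"
  shows "outer_content F \<le> L h"
proof (rule field_le_epsilon)
  fix e :: real assume e: "0 < e"
  define \<epsilon> where "\<epsilon> = min (1/2) (e / (total_mass + 1))"
  have \<epsilon>: "0 < \<epsilon>" "\<epsilon> < 1" using e total_mass_nonneg by (auto simp: \<epsilon>_def)
  have "\<epsilon> * outer_content F \<le> e / (total_mass + 1) * total_mass"
    using outer_content_nonneg[OF closedin_subset[OF F, simplified]] total_mass_nonneg e
      outer_content_le_total_mass[OF closedin_subset[OF F, simplified]]
    by (intro mult_mono) (auto simp: \<epsilon>_def)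
  also have "\<dots> \<le> e" using e total_mass_nonneg by (simp add: field_simps)
  finally show "outer_content F \<le> L h + e"
    using outer_content_closedin_shrink_le[OF F h h01 h1 \<epsilon>] by (simp add: algebra_simps)
qed

lemma level_slice_unit: "0 \<le> level_slice N j y \<and> level_slice N j y \<le> 1"
  by (simp add: level_slice_def)

lemma level_slice_between:
  fixes N j :: nat
  assumes f: "continuous_on \<Omega> f"
  defines "F \<equiv> {x\<in>\<Omega>. real j + 1 \<le> real N * f x}" and "G \<equiv> {x\<in>\<Omega>. real j < real N * f x}"
  shows "outer_content F \<le> L (\<lambda>x. level_slice N j (f x))"
    and "L (\<lambda>x. level_slice N j (f x)) \<le> outer_content G"
    and "outer_content F \<le> integral\<^sup>L riesz_measure (\<lambda>x. level_slice N j (f x))"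
    and "integral\<^sup>L riesz_measure (\<lambda>x. level_slice N j (f x)) \<le> outer_content G"
proof -
  let ?g = "\<lambda>x. level_slice N j (f x)"
  have gc: "continuous_on \<Omega> ?g" unfolding level_slice_def using f by (intro continuous_intros)
  have F: "closedin (top_of_set \<Omega>) F" unfolding F_def using f by (intro closedin_superlevel continuous_intros)
  have G: "relopen G" unfolding G_def using f by (intro openin_superlevel continuous_intros)
  have g: "?g \<in> unit_fns G" using gc by (auto simp: unit_fns_def G_def level_slice_def)
  have g1: "\<forall>x\<in>F. ?g x = 1" by (auto simp: F_def level_slice_def)
  show "outer_content F \<le> L ?g"
    using outer_content_closedin_le[OF F unit_fns_CZ[OF g]] g1 level_slice_unit by blast
  show "L ?g \<le> outer_content G" by (rule L_le_outer_content[OF G g])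
  have int_g: "integrable riesz_measure ?g"
    using gc level_slice_unit by (intro riesz_measure_integrable_unit) auto
  have fin: "emeasure riesz_measure A < \<infinity>" for A
    using finite_measure.emeasure_finite[OF finite_measure_riesz_measure, of A] by (simp add: top.not_eq_extremum)
  have FG: "F \<subseteq> \<Omega>" "G \<subseteq> \<Omega>" by (auto simp: F_def G_def)
  have "outer_content F = integral\<^sup>L riesz_measure (indicator F)"
    using closedin_in_sets[OF F] by (simp add: measure_riesz_measure space_riesz_measure Int_absorb2[OF FG(1)])
  also have "\<dots> \<le> integral\<^sup>L riesz_measure ?g"
    using closedin_in_sets[OF F] int_g g1 fin level_slice_unit
    by (intro integral_mono integrable_real_indicator) (auto simp: sets_riesz_measure split: split_indicator)
  finally show "outer_content F \<le> integral\<^sup>L riesz_measure ?g" .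
  have "integral\<^sup>L riesz_measure ?g \<le> integral\<^sup>L riesz_measure (indicator G)"
    using relopen_in_sets[OF G] int_g fin level_slice_unit
    by (intro integral_mono integrable_real_indicator)
       (auto simp: sets_riesz_measure space_riesz_measure G_def level_slice_def split: split_indicator)
  also have "\<dots> = outer_content G"
    using relopen_in_sets[OF G] by (simp add: measure_riesz_measure space_riesz_measure Int_absorb2[OF FG(2)])
  finally show "integral\<^sup>L riesz_measure ?g \<le> outer_content G" .
qed

text \<open>Slicing \<open>f\<close> into \<open>N\<close> layers, \<open>L\<close> and the integral of each layer lie between the outer
  contents of consecutive superlevel sets, and these differences telescope.\<close>

lemma level_slices_dist_le:
  fixes f :: "'a \<Rightarrow> real"
  assumes fc: "continuous_on \<Omega> f"
  shows "\<bar>(\<Sum>j<N. L (\<lambda>x. level_slice N j (f x))) - (\<Sum>j<N. integral\<^sup>L riesz_measure (\<lambda>x. level_slice N j (f x)))\<bar>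
           \<le> total_mass"
proof -
  define b where "b j = outer_content {x\<in>\<Omega>. real j < real N * f x}" for j
  have next_le: "b (Suc j) \<le> outer_content {x\<in>\<Omega>. real j + 1 \<le> real N * f x}" for j
    unfolding b_def by (intro outer_content_mono) auto
  have slice: "\<bar>L (\<lambda>x. level_slice N j (f x)) - integral\<^sup>L riesz_measure (\<lambda>x. level_slice N j (f x))\<bar>
                 \<le> b j - b (Suc j)" for j
    using level_slice_between[OF fc, where N=N and j=j] next_le[of j] unfolding b_def
    by (auto simp: abs_le_iff)
  have "\<bar>(\<Sum>j<N. L (\<lambda>x. level_slice N j (f x))) - (\<Sum>j<N. integral\<^sup>L riesz_measure (\<lambda>x. level_slice N j (f x)))\<bar>
          \<le> (\<Sum>j<N. \<bar>L (\<lambda>x. level_slice N j (f x)) - integral\<^sup>L riesz_measure (\<lambda>x. level_slice N j (f x))\<bar>)"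
    by (simp add: sum_subtractf[symmetric] sum_abs)
  also have "\<dots> \<le> (\<Sum>j<N. b j - b (Suc j))" by (intro sum_mono slice)
  also have "\<dots> = b 0 - b N" by (rule sum_lessThan_telescope')
  also have "\<dots> \<le> total_mass"
    using outer_content_le_total_mass[of "{x\<in>\<Omega>. real 0 < real N * f x}"]
      outer_content_nonneg[of "{x\<in>\<Omega>. real N < real N * f x}"]
    by (simp add: b_def)
  finally show ?thesis .
qed

lemma L_integral_dist_le:
  assumes f: "f \<in> CZ \<Omega> Z" and f01: "\<forall>x\<in>\<Omega>. 0 \<le> f x \<and> f x \<le> 1" and N: "N > 0"
  shows "\<bar>L f - integral\<^sup>L riesz_measure f\<bar> \<le> total_mass / real N"
proof -
  have fc: "continuous_on \<Omega> f" by (rule CZ_continuous_on[OF f])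
  define g where "g j = (\<lambda>x. level_slice N j (f x))" for j
  have gC: "g j \<in> CZ \<Omega> Z" for j
    unfolding g_def level_slice_def using fc by (intro CZ_bounded[where B=1] continuous_intros) auto
  have int_g: "integrable riesz_measure (g j)" for j
    unfolding g_def using fc level_slice_unit
    by (intro riesz_measure_integrable_unit) (auto simp: level_slice_def intro!: continuous_intros)
  have f_eq: "\<forall>x\<in>\<Omega>. f x = (1 / real N) * (\<Sum>j<N. g j x)"
    using f01 N by (simp add: g_def sum_level_slice)
  have sumC: "(\<lambda>x. \<Sum>j<N. g j x) \<in> CZ \<Omega> Z" using gC by (intro CZ_sum) auto
  have "L f = L (\<lambda>x. (1 / real N) * (\<Sum>j<N. g j x))"
    using f_eq by (intro L_cong f CZ_cmult sumC)
  also have "\<dots> = (1 / real N) * L (\<lambda>x. \<Sum>j<N. g j x)" by (rule L_cmult[OF sumC])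
  also have "\<dots> = (1 / real N) * (\<Sum>j<N. L (g j))" by (simp add: L_sum[OF finite_lessThan gC])
  finally have Lf: "L f = (1 / real N) * (\<Sum>j<N. L (g j))" .
  have "integral\<^sup>L riesz_measure f = integral\<^sup>L riesz_measure (\<lambda>x. (1 / real N) * (\<Sum>j<N. g j x))"
    using f_eq by (intro Bochner_Integration.integral_cong) (auto simp: space_riesz_measure)
  also have "\<dots> = (1 / real N) * (\<Sum>j<N. integral\<^sup>L riesz_measure (g j))"
    using int_g by (simp add: Bochner_Integration.integral_sum)
  finally have If: "integral\<^sup>L riesz_measure f = (1 / real N) * (\<Sum>j<N. integral\<^sup>L riesz_measure (g j))" .
  have "L f - integral\<^sup>L riesz_measure f
          = ((\<Sum>j<N. L (g j)) - (\<Sum>j<N. integral\<^sup>L riesz_measure (g j))) / real N"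
    unfolding Lf If by (simp add: diff_divide_distrib)
  then show ?thesis
    using level_slices_dist_le[OF fc, of N] N by (simp add: g_def abs_divide divide_right_mono)
qed

lemma L_eq_integral_unit:
  assumes f: "f \<in> CZ \<Omega> Z" and f01: "\<forall>x\<in>\<Omega>. 0 \<le> f x \<and> f x \<le> 1"
  shows "integrable riesz_measure f \<and> integral\<^sup>L riesz_measure f = L f"
proof
  show "integrable riesz_measure f"
    using CZ_continuous_on[OF f] f01 by (rule riesz_measure_integrable_unit)
  have "(\<lambda>N. total_mass / real N) \<longlonglongrightarrow> 0" by (rule lim_const_over_n)
  moreover have "\<forall>N\<ge>1. \<bar>L f - integral\<^sup>L riesz_measure f\<bar> \<le> total_mass / real N"
    using L_integral_dist_le[OF f f01] by auto
  ultimately have "\<bar>L f - integral\<^sup>L riesz_measure f\<bar> \<le> 0" by (intro LIMSEQ_le_const) auto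
  then show "integral\<^sup>L riesz_measure f = L f" by simp
qed

lemma L_eq_integral_bounded:
  assumes f: "f \<in> CZ \<Omega> Z" and f0m: "\<forall>x\<in>\<Omega>. 0 \<le> f x \<and> f x \<le> m" and m: "m > 0"
  shows "integrable riesz_measure f \<and> integral\<^sup>L riesz_measure f = L f"
proof -
  define g where "g x = (1 / m) * f x" for x
  have g: "g \<in> CZ \<Omega> Z" unfolding g_def by (rule CZ_cmult[OF f])
  have "\<forall>x\<in>\<Omega>. 0 \<le> g x \<and> g x \<le> 1" using f0m m by (auto simp: g_def field_simps)
  then have "integrable riesz_measure g \<and> integral\<^sup>L riesz_measure g = L g"
    by (rule L_eq_integral_unit[OF g])
  moreover have "f = (\<lambda>x. m * g x)" using m by (auto simp: g_def fun_eq_iff)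
  ultimately show ?thesis by (simp add: L_cmult[OF g])
qed

lemma L_excess_le:
  assumes X: "X \<in> CZ \<Omega> Z" and c: "c > 0" and XZ: "\<forall>x\<in>\<Omega>. X x \<le> c * Z x"
  shows "L (\<lambda>x. max (X x - t) 0) \<le> c * L (\<lambda>x. max (Z x - t / c) 0)"
proof -
  have "max (X x - t) 0 \<le> c * max (Z x - t / c) 0" if x: "x \<in> \<Omega>" for x
  proof -
    have "X x - t \<le> c * (Z x - t / c)" using c XZ x by (auto simp: right_diff_distrib)
    also have "\<dots> \<le> c * max (Z x - t / c) 0" using c by (intro mult_left_mono) auto
    finally show ?thesis using c by auto
  qed
  then have "L (\<lambda>x. max (X x - t) 0) \<le> L (\<lambda>x. c * max (Z x - t / c) 0)"
    by (intro L_mono CZ_max0 CZ_diff X CZ_const CZ_cmult CZ_Z_excess) auto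
  then show ?thesis by (simp add: L_cmult[OF CZ_Z_excess])
qed

lemma L_excess_tendsto:
  assumes X: "X \<in> CZ \<Omega> Z"
  shows "(\<lambda>n. L (\<lambda>x. max (X x - real n) 0)) \<longlonglongrightarrow> 0"
proof -
  obtain c0 where c0: "c0 \<ge> 0" "\<forall>x\<in>\<Omega>. \<bar>X x\<bar> \<le> c0 * Z x" using X by (rule CZ_boundE)
  define c where "c = c0 + 1"
  have c: "c > 0" using c0 by (simp add: c_def)
  have XZ: "\<forall>x\<in>\<Omega>. X x \<le> c * Z x"
  proof
    fix x assume x: "x \<in> \<Omega>"
    have "X x \<le> c0 * Z x" using c0 x by force
    also have "\<dots> \<le> c * Z x" using Z_ge1 x by (intro mult_right_mono) (auto simp: c_def)
    finally show "X x \<le> c * Z x" .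
  qed
  have "filterlim (\<lambda>n. (1 / c) * real n) at_top sequentially"
    using c by (intro filterlim_tendsto_pos_mult_at_top[OF tendsto_const _ filterlim_real_sequentially]) auto
  then have "(\<lambda>n. L (\<lambda>x. max (Z x - real n / c) 0)) \<longlonglongrightarrow> 0"
    using filterlim_compose[OF L_tight] by simp
  then have upper: "(\<lambda>n. c * L (\<lambda>x. max (Z x - real n / c) 0)) \<longlonglongrightarrow> 0"
    by (rule tendsto_mult_right_zero)
  show ?thesis
  proof (rule tendsto_sandwich[OF _ _ tendsto_const upper])
    show "eventually (\<lambda>n. 0 \<le> L (\<lambda>x. max (X x - real n) 0)) sequentially"
      using L_nonneg[OF CZ_max0[OF CZ_diff[OF X CZ_const]]] by (intro always_eventually) auto
    show "eventually (\<lambda>n. L (\<lambda>x. max (X x - real n) 0) \<le> c * L (\<lambda>x. max (Z x - real n / c) 0)) sequentially"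
      using L_excess_le[OF X c XZ] by (intro always_eventually) blast
  qed
qed

lemma L_min_tendsto:
  assumes X: "X \<in> CZ \<Omega> Z"
  shows "(\<lambda>n. L (\<lambda>x. min (X x) (real n))) \<longlonglongrightarrow> L X"
proof -
  have excess: "(\<lambda>x. max (X x - real n) 0) \<in> CZ \<Omega> Z" for n by (intro CZ_max0 CZ_diff X CZ_const)
  have "L (\<lambda>x. min (X x) (real n)) = L (\<lambda>x. X x - max (X x - real n) 0)" for n
    by (intro L_cong CZ_min_const X CZ_diff excess) auto
  then have "L (\<lambda>x. min (X x) (real n)) = L X - L (\<lambda>x. max (X x - real n) 0)" for n
    by (simp add: L_diff[OF X excess])
  moreover have "(\<lambda>n. L X - L (\<lambda>x. max (X x - real n) 0)) \<longlonglongrightarrow> L X - 0"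
    by (intro tendsto_diff tendsto_const L_excess_tendsto X)
  ultimately show ?thesis by simp
qed

lemma L_eq_integral_nonneg:
  assumes X: "X \<in> CZ \<Omega> Z" and X0: "\<forall>x\<in>\<Omega>. 0 \<le> X x"
  shows "integrable riesz_measure X \<and> integral\<^sup>L riesz_measure X = L X"
proof -
  define Xn where "Xn n x = min (X x) (real n)" for n x
  have Xn: "integrable riesz_measure (Xn n) \<and> integral\<^sup>L riesz_measure (Xn n) = L (Xn n)" for n
    unfolding Xn_def using X0
    by (intro L_eq_integral_bounded[where m="real n + 1"] CZ_min_const[OF X]) auto
  have "AE x in riesz_measure. mono (\<lambda>n. Xn n x)"
    by (intro AE_I2) (auto simp: mono_def Xn_def)
  moreover have "AE x in riesz_measure. 0 \<le> Xn n x" for n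
    using X0 by (intro AE_I2) (auto simp: space_riesz_measure Xn_def)
  moreover have "AE x in riesz_measure. (\<lambda>n. Xn n x) \<longlonglongrightarrow> X x"
  proof (intro AE_I2)
    fix x
    obtain N :: nat where "X x \<le> real N" using real_arch_simple by blast
    then have "eventually (\<lambda>n. Xn n x = X x) sequentially"
      unfolding eventually_sequentially by (intro exI[of _ N]) (auto simp: Xn_def)
    then show "(\<lambda>n. Xn n x) \<longlonglongrightarrow> X x" by (rule tendsto_eventually)
  qed
  moreover have "(\<lambda>n. integral\<^sup>L riesz_measure (Xn n)) \<longlonglongrightarrow> L X"
    using L_min_tendsto[OF X] Xn unfolding Xn_def by simp
  moreover have "X \<in> borel_measurable riesz_measure"
    by (rule riesz_measure_borel_measurable[OF CZ_continuous_on[OF X]])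
  ultimately show ?thesis
    using integral_monotone_convergence_nonneg[of riesz_measure Xn] Xn by blast
qed

lemma L_eq_integral:
  assumes X: "X \<in> CZ \<Omega> Z"
  shows "integrable riesz_measure X \<and> integral\<^sup>L riesz_measure X = L X"
proof -
  define P where "P x = max (X x) 0" for x
  define N where "N x = max (- X x) 0" for x
  have P: "P \<in> CZ \<Omega> Z" and N: "N \<in> CZ \<Omega> Z" unfolding P_def N_def by (intro CZ_max0 CZ_uminus X)+
  have "integrable riesz_measure P \<and> integral\<^sup>L riesz_measure P = L P"
    by (rule L_eq_integral_nonneg[OF P]) (auto simp: P_def)
  moreover have "integrable riesz_measure N \<and> integral\<^sup>L riesz_measure N = L N"
    by (rule L_eq_integral_nonneg[OF N]) (auto simp: N_def)
  moreover have "\<forall>x\<in>\<Omega>. X x = P x - N x" by (auto simp: P_def N_def)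
  moreover have "L X = L P - L N"
    using L_cong[OF X CZ_diff[OF P N]] calculation(3) L_diff[OF P N] by simp
  ultimately show ?thesis
    using Bochner_Integration.integrable_cong[of riesz_measure riesz_measure X "\<lambda>x. P x - N x"]
      Bochner_Integration.integral_cong[of riesz_measure riesz_measure X "\<lambda>x. P x - N x"]
    by (auto simp: space_riesz_measure)
qed

lemma riesz_measure_in_caZ: "riesz_measure \<in> caZ \<Omega> Z"
  unfolding caZ_def
proof (intro CollectI conjI)
  show "space riesz_measure = \<Omega>" by (rule space_riesz_measure)
  show "sets riesz_measure = sets (restrict_space borel \<Omega>)" by (rule sets_riesz_measure)
  have "integrable riesz_measure Z" using L_eq_integral[OF CZ_Z] by simp
  then have "(\<integral>\<^sup>+ x. ennreal (Z x) \<partial>riesz_measure) \<noteq> \<infinity>" by (rule integrableD(2))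
  then show "(\<integral>\<^sup>+ x. ennreal (Z x) \<partial>riesz_measure) < \<infinity>" by (simp add: top.not_eq_extremum)
qed

theorem riesz_representation: "\<exists>\<mu>\<in>caZ \<Omega> Z. \<forall>X\<in>CZ \<Omega> Z. pairing X \<mu> = L X"
  using riesz_measure_in_caZ L_eq_integral by (auto simp: pairing_def)

end

section \<open>Compactness of sublevel sets of the conjugate\<close>

lemma closure_of_continuous_map_in:
  assumes "continuous_map X Y g" and "closedin Y K" and "g ` S \<subseteq> K" and "x \<in> X closure_of S"
  shows "g x \<in> K"
  using continuous_map_image_closure_subset[OF assms(1), of S] closure_of_minimal[OF assms(3,2)] assms(4)
  by blast

lemma compactin_pullback_topology:
  assumes compact: "compactin T (f ` S)" and "S \<subseteq> A"
  shows "compactin (pullback_topology A f T) S"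
  unfolding compactin_def
proof (intro conjI allI impI)
  show "S \<subseteq> topspace (pullback_topology A f T)"
    using compactin_subset_topspace[OF compact] \<open>S \<subseteq> A\<close> by (auto simp: topspace_pullback_topology)
  fix \<U> assume \<U>: "(\<forall>W\<in>\<U>. openin (pullback_topology A f T) W) \<and> S \<subseteq> \<Union>\<U>"
  then have "\<forall>W\<in>\<U>. \<exists>V. openin T V \<and> f -` V \<inter> A = W" by (auto simp: openin_pullback_topology)
  from bchoice[OF this] obtain V where "\<forall>W\<in>\<U>. openin T (V W) \<and> f -` V W \<inter> A = W" ..
  then have V_open: "\<And>W. W \<in> \<U> \<Longrightarrow> openin T (V W)" and V: "\<And>W. W \<in> \<U> \<Longrightarrow> f -` V W \<inter> A = W"
    by auto
  have "f ` S \<subseteq> \<Union>(V ` \<U>)"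
  proof
    fix y assume "y \<in> f ` S"
    then obtain x where x: "x \<in> S" "y = f x" by blast
    then obtain W where W: "W \<in> \<U>" "x \<in> W" using \<U> by blast
    then have "x \<in> f -` V W \<inter> A" using V[OF W(1)] by simp
    then show "y \<in> \<Union>(V ` \<U>)" using W(1) x(2) by blast
  qed
  moreover have "\<forall>Q\<in>V ` \<U>. openin T Q" using V_open by blast
  ultimately obtain \<V> where \<V>: "finite \<V>" "\<V> \<subseteq> V ` \<U>" "f ` S \<subseteq> \<Union>\<V>"
    using compact unfolding compactin_def by meson
  then obtain \<U>' where \<U>': "\<U>' \<subseteq> \<U>" "finite \<U>'" "\<V> = V ` \<U>'"
    by (meson finite_subset_image)
  have "S \<subseteq> \<Union>\<U>'"
  proof
    fix x assume x: "x \<in> S"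
    then obtain W where W: "W \<in> \<U>'" "f x \<in> V W" using \<V>(3) \<U>'(3) by blast
    then have "x \<in> f -` V W \<inter> A" using x \<open>S \<subseteq> A\<close> by blast
    then have "x \<in> W" using V[OF subsetD[OF \<U>'(1) W(1)]] by simp
    then show "x \<in> \<Union>\<U>'" using W(1) by blast
  qed
  then show "\<exists>\<F>. finite \<F> \<and> \<F> \<subseteq> \<U> \<and> S \<subseteq> \<Union>\<F>" using \<U>' by blast
qed

context proper_weighted_space
begin

definition conj_sublevel :: "(('a \<Rightarrow> real) \<Rightarrow> real) \<Rightarrow> real \<Rightarrow> 'a measure set" where
  "conj_sublevel \<psi> a = {\<mu>\<in>caZ \<Omega> Z. conj_CZ \<Omega> Z \<psi> \<mu> \<le> ereal a}"

definition pairings :: "'a measure \<Rightarrow> ('a \<Rightarrow> real) \<Rightarrow> real" where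
  "pairings \<mu> = restrict (\<lambda>X. pairing X \<mu>) (CZ \<Omega> Z)"

lemma pairings_apply: "X \<in> CZ \<Omega> Z \<Longrightarrow> pairings \<mu> X = pairing X \<mu>"
  by (simp add: pairings_def)

lemma pairings_in_topspace: "pairings \<mu> \<in> topspace (powertop_real (CZ \<Omega> Z))"
  by (simp add: pairings_def)

lemma conj_sublevel_iff:
  "\<mu> \<in> conj_sublevel \<psi> a \<longleftrightarrow> \<mu> \<in> caZ \<Omega> Z \<and> (\<forall>X\<in>CZ \<Omega> Z. pairing X \<mu> - \<psi> X \<le> a)"
  by (simp add: conj_sublevel_def conj_CZ_le_iff)

lemma topspace_weak_topology_caZ: "topspace (weak_topology_caZ \<Omega> Z) = caZ \<Omega> Z"
  using CZ_const[of 0] unfolding weak_topology_caZ_def topology_generated_by_topspace by auto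

lemma openin_weak_topology_caZ_imp_pullback:
  assumes "openin (weak_topology_caZ \<Omega> Z) W"
  shows "openin (pullback_topology (caZ \<Omega> Z) pairings (powertop_real (CZ \<Omega> Z))) W"
proof (rule generate_topology_on_coarsest[OF istopology_openin _
      assms[unfolded weak_topology_caZ_def openin_topology_generated_by_iff]])
  fix s assume "s \<in> {{\<mu> \<in> caZ \<Omega> Z. pairing X \<mu> \<in> U} | X U. X \<in> CZ \<Omega> Z \<and> open U}"
  then obtain X U where s: "s = {\<mu> \<in> caZ \<Omega> Z. pairing X \<mu> \<in> U}" and X: "X \<in> CZ \<Omega> Z" and "open U"
    by blast
  let ?V = "{h \<in> topspace (powertop_real (CZ \<Omega> Z)). h X \<in> U}"
  have "openin (powertop_real (CZ \<Omega> Z)) ?V"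
    using X \<open>open U\<close> by (intro openin_continuous_map_preimage[OF continuous_map_product_projection]) auto
  moreover have "s = pairings -` ?V \<inter> caZ \<Omega> Z"
    using pairings_in_topspace by (auto simp: s pairings_apply[OF X])
  ultimately show "openin (pullback_topology (caZ \<Omega> Z) pairings (powertop_real (CZ \<Omega> Z))) s"
    unfolding openin_pullback_topology by blast
qed

lemma continuous_map_pullback_weak_topology_caZ:
  "continuous_map (pullback_topology (caZ \<Omega> Z) pairings (powertop_real (CZ \<Omega> Z))) (weak_topology_caZ \<Omega> Z) id"
proof -
  have space: "topspace (pullback_topology (caZ \<Omega> Z) pairings (powertop_real (CZ \<Omega> Z))) = caZ \<Omega> Z"
    using pairings_in_topspace by (auto simp: topspace_pullback_topology)
  show ?thesis
    unfolding continuous_map_def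
  proof (intro conjI allI impI)
    show "id \<in> topspace (pullback_topology (caZ \<Omega> Z) pairings (powertop_real (CZ \<Omega> Z)))
                \<rightarrow> topspace (weak_topology_caZ \<Omega> Z)"
      by (simp add: space topspace_weak_topology_caZ)
    fix W assume W: "openin (weak_topology_caZ \<Omega> Z) W"
    then have "{x \<in> topspace (pullback_topology (caZ \<Omega> Z) pairings (powertop_real (CZ \<Omega> Z))). id x \<in> W} = W"
      using openin_subset[OF W] by (auto simp: space topspace_weak_topology_caZ)
    then show "openin (pullback_topology (caZ \<Omega> Z) pairings (powertop_real (CZ \<Omega> Z)))
                 {x \<in> topspace (pullback_topology (caZ \<Omega> Z) pairings (powertop_real (CZ \<Omega> Z))). id x \<in> W}"
      using openin_weak_topology_caZ_imp_pullback[OF W] by simp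
  qed
qed

lemma pairings_conj_sublevel_bounded:
  "\<exists>K. compactin (powertop_real (CZ \<Omega> Z)) K \<and> pairings ` conj_sublevel \<psi> a \<subseteq> K"
proof -
  have "\<exists>c\<ge>0. \<forall>\<omega>\<in>\<Omega>. \<bar>X \<omega>\<bar> \<le> c * Z \<omega>" if "X \<in> CZ \<Omega> Z" for X
    by (rule CZ_boundE[OF that]) blast
  then obtain c where c: "\<And>X. X \<in> CZ \<Omega> Z \<Longrightarrow> c X \<ge> 0 \<and> (\<forall>\<omega>\<in>\<Omega>. \<bar>X \<omega>\<bar> \<le> c X * Z \<omega>)"
    by metis
  define K where "K X = {- (c X * (a + \<psi> Z)) .. c X * (a + \<psi> Z)}" for X
  have "pairings \<mu> \<in> (\<Pi>\<^sub>E X\<in>CZ \<Omega> Z. K X)" if \<mu>: "\<mu> \<in> conj_sublevel \<psi> a" for \<mu>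
  proof -
    have \<mu>Z: "pairing Z \<mu> \<le> a + \<psi> Z" using \<mu> CZ_Z by (auto simp: conj_sublevel_iff)
    have "pairing X \<mu> \<in> K X" if X: "X \<in> CZ \<Omega> Z" for X
    proof -
      have "\<bar>pairing X \<mu>\<bar> \<le> c X * pairing Z \<mu>"
        using \<mu> c[OF X] X by (intro caZ_pairing_abs_le) (auto simp: conj_sublevel_iff)
      also have "\<dots> \<le> c X * (a + \<psi> Z)" using c[OF X] \<mu>Z by (intro mult_left_mono) auto
      finally show ?thesis by (simp add: K_def abs_le_iff)
    qed
    then show ?thesis by (auto simp: pairings_def)
  qed
  moreover have "compactin (powertop_real (CZ \<Omega> Z)) (\<Pi>\<^sub>E X\<in>CZ \<Omega> Z. K X)"
    unfolding compactin_PiE by (auto simp: K_def compactin_euclidean_iff)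
  ultimately show ?thesis by blast
qed

lemma closure_pairings_conj_sublevel_in:
  assumes h: "h \<in> powertop_real (CZ \<Omega> Z) closure_of (pairings ` conj_sublevel \<psi> a)"
    and g: "continuous_map (powertop_real (CZ \<Omega> Z)) euclideanreal g" and K: "closed K"
    and gK: "\<And>\<mu>. \<mu> \<in> conj_sublevel \<psi> a \<Longrightarrow> g (pairings \<mu>) \<in> K"
  shows "g h \<in> K"
proof (rule closure_of_continuous_map_in[OF g _ _ h])
  show "closedin euclideanreal K" using K by (metis closed_closedin)
  show "g ` pairings ` conj_sublevel \<psi> a \<subseteq> K" using gK by blast
qed

lemma continuous_map_pairings_eval:
  "X \<in> CZ \<Omega> Z \<Longrightarrow> continuous_map (powertop_real (CZ \<Omega> Z)) euclideanreal (\<lambda>h. h X)"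
  by (rule continuous_map_product_projection)

lemma closure_pairings_conj_sublevel_add:
  assumes h: "h \<in> powertop_real (CZ \<Omega> Z) closure_of (pairings ` conj_sublevel \<psi> a)"
    and X: "X \<in> CZ \<Omega> Z" and Y: "Y \<in> CZ \<Omega> Z"
  shows "h (\<lambda>\<omega>. X \<omega> + Y \<omega>) = h X + h Y"
proof -
  have "h (\<lambda>\<omega>. X \<omega> + Y \<omega>) - h X - h Y \<in> {0}"
  proof (rule closure_pairings_conj_sublevel_in[OF h, of "\<lambda>h. h (\<lambda>\<omega>. X \<omega> + Y \<omega>) - h X - h Y"])
    show "continuous_map (powertop_real (CZ \<Omega> Z)) euclideanreal (\<lambda>h. h (\<lambda>\<omega>. X \<omega> + Y \<omega>) - h X - h Y)"
      using X Y CZ_add[OF X Y] by (intro continuous_map_diff continuous_map_pairings_eval)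
    fix \<mu> assume "\<mu> \<in> conj_sublevel \<psi> a"
    then have "\<mu> \<in> caZ \<Omega> Z" by (simp add: conj_sublevel_iff)
    then have "pairing (\<lambda>\<omega>. X \<omega> + Y \<omega>) \<mu> = pairing X \<mu> + pairing Y \<mu>"
      unfolding pairing_def using caZ_integrable X Y by simp
    then show "pairings \<mu> (\<lambda>\<omega>. X \<omega> + Y \<omega>) - pairings \<mu> X - pairings \<mu> Y \<in> {0}"
      by (simp add: pairings_apply X Y CZ_add)
  qed simp
  then show ?thesis by simp
qed

lemma closure_pairings_conj_sublevel_cmult:
  assumes h: "h \<in> powertop_real (CZ \<Omega> Z) closure_of (pairings ` conj_sublevel \<psi> a)"
    and X: "X \<in> CZ \<Omega> Z"
  shows "h (\<lambda>\<omega>. r * X \<omega>) = r * h X"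
proof -
  have "h (\<lambda>\<omega>. r * X \<omega>) - r * h X \<in> {0}"
  proof (rule closure_pairings_conj_sublevel_in[OF h, of "\<lambda>h. h (\<lambda>\<omega>. r * X \<omega>) - r * h X"])
    show "continuous_map (powertop_real (CZ \<Omega> Z)) euclideanreal (\<lambda>h. h (\<lambda>\<omega>. r * X \<omega>) - r * h X)"
      using X CZ_cmult[OF X]
      by (intro continuous_map_diff continuous_map_real_mult continuous_map_pairings_eval) auto
    show "pairings \<mu> (\<lambda>\<omega>. r * X \<omega>) - r * pairings \<mu> X \<in> {0}" for \<mu>
      by (simp add: pairings_apply X CZ_cmult pairing_def)
  qed simp
  then show ?thesis by simp
qed

lemma closure_pairings_conj_sublevel_nonneg:
  assumes h: "h \<in> powertop_real (CZ \<Omega> Z) closure_of (pairings ` conj_sublevel \<psi> a)"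
    and X: "X \<in> CZ \<Omega> Z" and X0: "\<forall>\<omega>\<in>\<Omega>. 0 \<le> X \<omega>"
  shows "0 \<le> h X"
proof -
  have "h X \<in> {0..}"
  proof (rule closure_pairings_conj_sublevel_in[OF h continuous_map_pairings_eval[OF X]])
    fix \<mu> assume "\<mu> \<in> conj_sublevel \<psi> a"
    then have "space \<mu> = \<Omega>" by (simp add: conj_sublevel_iff caZ_space)
    then have "0 \<le> pairing X \<mu>"
      unfolding pairing_def using X0 by (intro Bochner_Integration.integral_nonneg) auto
    then show "pairings \<mu> X \<in> {0..}" by (simp add: pairings_apply X)
  qed simp
  then show ?thesis by simp
qed

lemma closure_pairings_conj_sublevel_le:
  assumes h: "h \<in> powertop_real (CZ \<Omega> Z) closure_of (pairings ` conj_sublevel \<psi> a)"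
    and X: "X \<in> CZ \<Omega> Z"
  shows "h X \<le> a + \<psi> X"
proof -
  have "h X \<in> {..a + \<psi> X}"
  proof (rule closure_pairings_conj_sublevel_in[OF h continuous_map_pairings_eval[OF X]])
    show "pairings \<mu> X \<in> {..a + \<psi> X}" if "\<mu> \<in> conj_sublevel \<psi> a" for \<mu>
      using that X by (auto simp: conj_sublevel_iff pairings_apply)
  qed simp
  then show ?thesis by simp
qed

lemma closedin_pairings_conj_sublevel:
  assumes \<psi>_lim: "\<forall>n::nat. ((\<lambda>z. \<psi> (\<lambda>\<omega>. real n * max (Z \<omega> - z) 0)) \<longlongrightarrow> \<psi> (\<lambda>\<omega>. 0)) at_top"
  shows "closedin (powertop_real (CZ \<Omega> Z)) (pairings ` conj_sublevel \<psi> a)"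
  unfolding closure_of_subset_eq[symmetric]
proof
  show "pairings ` conj_sublevel \<psi> a \<subseteq> topspace (powertop_real (CZ \<Omega> Z))"
    using pairings_in_topspace by auto
  show "powertop_real (CZ \<Omega> Z) closure_of pairings ` conj_sublevel \<psi> a \<subseteq> pairings ` conj_sublevel \<psi> a"
  proof
    fix h assume h: "h \<in> powertop_real (CZ \<Omega> Z) closure_of pairings ` conj_sublevel \<psi> a"
    have "tight_positive_functional \<Omega> Z h"
    proof (intro tight_positive_functional.intro proper_weighted_space_axioms
        tight_positive_functional_axioms.intro)
      show "((\<lambda>z. h (\<lambda>\<omega>. max (Z \<omega> - z) 0)) \<longlongrightarrow> 0) at_top"
        by (rule tight_if_dominated[OF closure_pairings_conj_sublevel_cmult[OF h]
              closure_pairings_conj_sublevel_nonneg[OF h] closure_pairings_conj_sublevel_le[OF h] \<psi>_lim])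
    qed (simp_all add: closure_pairings_conj_sublevel_add[OF h] closure_pairings_conj_sublevel_cmult[OF h]
           closure_pairings_conj_sublevel_nonneg[OF h])
    then obtain \<mu> where \<mu>: "\<mu> \<in> caZ \<Omega> Z" "\<forall>X\<in>CZ \<Omega> Z. pairing X \<mu> = h X"
      using tight_positive_functional.riesz_representation by blast
    have "pairing X \<mu> - \<psi> X \<le> a" if "X \<in> CZ \<Omega> Z" for X
      using \<mu>(2) closure_pairings_conj_sublevel_le[OF h that] that by simp
    then have "\<mu> \<in> conj_sublevel \<psi> a" using \<mu>(1) by (simp add: conj_sublevel_iff)
    moreover have "pairings \<mu> = h"
      using in_closure_of[THEN iffD1, OF h] \<mu>(2)
      by (auto simp: pairings_def PiE_def extensional_def fun_eq_iff)
    ultimately show "h \<in> pairings ` conj_sublevel \<psi> a" by blast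
  qed
qed

lemma compactin_conj_sublevel:
  assumes "\<forall>n::nat. ((\<lambda>z. \<psi> (\<lambda>\<omega>. real n * max (Z \<omega> - z) 0)) \<longlongrightarrow> \<psi> (\<lambda>\<omega>. 0)) at_top"
  shows "compactin (weak_topology_caZ \<Omega> Z) (conj_sublevel \<psi> a)"
proof -
  obtain K where "compactin (powertop_real (CZ \<Omega> Z)) K" "pairings ` conj_sublevel \<psi> a \<subseteq> K"
    using pairings_conj_sublevel_bounded by blast
  then have "compactin (powertop_real (CZ \<Omega> Z)) (pairings ` conj_sublevel \<psi> a)"
    using closed_compactin closedin_pairings_conj_sublevel[OF assms] by blast
  then have "compactin (pullback_topology (caZ \<Omega> Z) pairings (powertop_real (CZ \<Omega> Z))) (conj_sublevel \<psi> a)"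
    by (rule compactin_pullback_topology) (auto simp: conj_sublevel_def)
  from image_compactin[OF this continuous_map_pullback_weak_topology_caZ] show ?thesis by simp
qed

end

theorem lemmaA3:
  fixes \<Omega> :: "((real^'k::finite)^'t::finite) set"
    and k0 :: 'k
    and Z :: "(real^'k)^'t \<Rightarrow> real"
    and \<psi> :: "((real^'k)^'t \<Rightarrow> real) \<Rightarrow> real"
  assumes \<Omega>_sub: "\<Omega> \<subseteq> state_space k0"
    and \<Omega>_ne: "\<Omega> \<noteq> {}"
    and Z_ge1: "\<forall>\<omega>\<in>\<Omega>. 1 \<le> Z \<omega>"
    and Z_cont: "continuous_on \<Omega> Z"
    and Z_compact: "\<forall>z::real. 0 \<le> z \<longrightarrow> compact {\<omega>\<in>\<Omega>. Z \<omega> \<le> z}"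
    and \<psi>_incr: "increasing_on_CZ \<Omega> Z \<psi>"
    and \<psi>_conv: "convex_on_CZ \<Omega> Z \<psi>"
  shows "(\<exists>\<phi> :: real \<Rightarrow> ereal.
            (\<forall>x\<ge>0. \<phi> x \<noteq> -\<infinity>)
          \<and> mono_on {0..} \<phi>
          \<and> ereal_convex_on {0..} \<phi>
          \<and> ((\<lambda>x. \<phi> x / ereal x) \<longlongrightarrow> \<infinity>) at_top
          \<and> (\<forall>\<mu>\<in>caZ \<Omega> Z. conj_CZ \<Omega> Z \<psi> \<mu> \<ge> \<phi> (pairing Z \<mu>)))
       \<and> ((\<forall>n::nat. ((\<lambda>z::real. \<psi> (\<lambda>\<omega>. real n * max (Z \<omega> - z) 0)) \<longlongrightarrow> \<psi> (\<lambda>\<omega>. 0)) at_top)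
          \<longrightarrow> (\<forall>a::real. compactin (weak_topology_caZ \<Omega> Z)
                              {\<mu>\<in>caZ \<Omega> Z. conj_CZ \<Omega> Z \<psi> \<mu> \<le> ereal a}))"
proof -
  interpret proper_weighted_space \<Omega> Z
    using Z_ge1 Z_cont Z_compact by unfold_locales
  show ?thesis
    using conj_CZ_superlinear_minorant compactin_conj_sublevel by (simp add: conj_sublevel_def)
qed

end
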